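(* Let $(G,\eta\colon M\otimes G\to G)$ be an initial algebra of the endofunctor $M\otimes-$ on $\mathsf{SquaMS}$, let $Q=C(G)$ be its Cauchy completion, and let $\gamma\colon Q\to M\otimes Q$ be the composite of $C(\eta^{-1})\colon C(G)\to C(M\otimes G)$ with the canonical isometric isomorphism $C(M\otimes G)\cong M\otimes C(G)$. Then the metric space $Q$ is bilipschitz equivalent to the Sierpinski carpet $\mathbb{S}$, viewed as a subset of the plane with the taxicab metric, and thus also with the Euclidean metric.
   Context: Let $M_0=\{(r,s)\in[0,1]^2: r\in\{0,1\}\text{ or } s\in\{0,1\}\}$ be the boundary of the unit square. A square metric space is a pair $(X,S_X)$ where $X$ is a metric space with all distances at most $2$ and $S_X\colon M_0\to X$ is injective, such that (sq1) for $i\in\{0,1\}$ and $r,s\in[0,1]$, $d_X(S_X(i,r),S_X(i,s))=|s-r|$ and $d_X(S_X(r,i),S_X(s,i))=|s-r|$; (sq2) for all $(r,s),(t,u)\in M_0$, $d_X(S_X(r,s),S_X(t,u))\ge |r-t|+|s-u|$. $\mathsf{SquaMS}$ is the category of square metric spaces whose morphisms are short (non-expanding) maps $f\colon X\to Y$ with $f\circ S_X=S_Y$. Let $N=\{0,1,2\}^2$ and $M=N\setminus\{(1,1)\}$, elements viewed also as points of $\mathbb{R}^2$. For $X$ in $\mathsf{SquaMS}$, let $\sim$ be the equivalence relation on $M\times X$ generated by $(m,S_X(p))\sim(n,S_X(q))$ whenever $m,n\in M$ differ by exactly $1$ in exactly one coordinate and $(m+p)/3=(n+q)/3$ in $\mathbb{R}^2$.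 Then $M\otimes X=(M\times X)/\!\sim$, with $m\otimes x$ the class of $(m,x)$. On $M\times X$ put $d((a,u),(b,v))=\frac13 d_X(u,v)$ if $a=b$ and $2$ otherwise; the metric on $M\otimes X$ is the quotient metric: $d(m\otimes x,n\otimes y)$ is the infimum, over finite sequences $(m,x)=z_0,z_1,\dots,z_k=(n,y)$ in $M\times X$, of the sum over consecutive pairs of $0$ if the pair is $\sim$-related and of $d(z_i,z_{i+1})$ otherwise. $S_{M\otimes X}(p)=m\otimes S_X(3p-m)$ for any $m\in M$ with $p\in (m+[0,1]^2)/3$, and for a morphism $f$, $(M\otimes f)(m\otimes x)=m\otimes f(x)$; this defines an endofunctor $M\otimes-$ of $\mathsf{SquaMS}$. Cauchy completion $C(X)$: Cauchy sequences modulo equivalence, $d((x_i),(y_i))=\lim d_X(x_i,y_i)$, with $S_{C(X)}(p)$ the class of the constant sequence $S_X(p)$. The Sierpinski carpet $\mathbb{S}$ is the unique nonempty compact subset $K$ of $[0,1]^2$ with $K=\bigcup_{m\in M}\frac13(m+K)$. Two metric spaces $A,B$ are bilipschitz equivalent if there is a bijection $f\colon A\to B$ and $K\ge1$ with $\frac1K d_A(x,y)\le d_B(f(x),f(y))\le K d_A(x,y)$ for all $x,y$. *)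

theory Defs
  imports "HOL-Analysis.Analysis"
begin

definition M0 :: "(real \<times> real) set" where
  "M0 = {(r, s). r \<in> {0..1} \<and> s \<in> {0..1} \<and> (r \<in> {0, 1} \<or> s \<in> {0, 1})}"

type_synonym 'a squams = "'a set \<times> ('a \<Rightarrow> 'a \<Rightarrow> real) \<times> (real \<times> real \<Rightarrow> 'a)"

definition carr :: "'a squams \<Rightarrow> 'a set" where "carr X = fst X"
definition dst :: "'a squams \<Rightarrow> 'a \<Rightarrow> 'a \<Rightarrow> real" where "dst X = fst (snd X)"
definition sqm :: "'a squams \<Rightarrow> real \<times> real \<Rightarrow> 'a" where "sqm X = snd (snd X)"

definition is_squams :: "'a squams \<Rightarrow> bool" where
  "is_squams X \<longleftrightarrow>
     Metric_space (carr X) (dst X) \<and>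
     (\<forall>x\<in>carr X. \<forall>y\<in>carr X. dst X x y \<le> 2) \<and>
     sqm X ` M0 \<subseteq> carr X \<and> inj_on (sqm X) M0 \<and>
     (\<forall>i\<in>{0,1}. \<forall>r\<in>{0..1}. \<forall>s\<in>{0..1}.
        dst X (sqm X (i, r)) (sqm X (i, s)) = \<bar>s - r\<bar> \<and>
        dst X (sqm X (r, i)) (sqm X (s, i)) = \<bar>s - r\<bar>) \<and>
     (\<forall>(r, s)\<in>M0. \<forall>(t, u)\<in>M0.
        dst X (sqm X (r, s)) (sqm X (t, u)) \<ge> \<bar>r - t\<bar> + \<bar>s - u\<bar>)"

definition is_mor :: "'a squams \<Rightarrow> 'b squams \<Rightarrow> ('a \<Rightarrow> 'b) \<Rightarrow> bool" where
  "is_mor X Y f \<longleftrightarrow>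
     f ` carr X \<subseteq> carr Y \<and>
     (\<forall>x\<in>carr X. \<forall>y\<in>carr X. dst Y (f x) (f y) \<le> dst X x y) \<and>
     (\<forall>p\<in>M0. f (sqm X p) = sqm Y p)"

definition Mset :: "(nat \<times> nat) set" where
  "Mset = ({0, 1, 2} \<times> {0, 1, 2}) - {(1, 1)}"

definition adjacent :: "nat \<times> nat \<Rightarrow> nat \<times> nat \<Rightarrow> bool" where
  "adjacent m n \<longleftrightarrow>
     (fst m = fst n \<and> \<bar>real (snd m) - real (snd n)\<bar> = 1) \<or>
     (snd m = snd n \<and> \<bar>real (fst m) - real (fst n)\<bar> = 1)"

definition glue_gen :: "'a squams \<Rightarrow> (nat \<times> nat) \<times> 'a \<Rightarrow> (nat \<times> nat) \<times> 'a \<Rightarrow> bool" where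
  "glue_gen X a b \<longleftrightarrow>
     fst a \<in> Mset \<and> fst b \<in> Mset \<and> adjacent (fst a) (fst b) \<and>
     (\<exists>p\<in>M0. \<exists>q\<in>M0. snd a = sqm X p \<and> snd b = sqm X q \<and>
        (real (fst (fst a)) + fst p) / 3 = (real (fst (fst b)) + fst q) / 3 \<and>
        (real (snd (fst a)) + snd p) / 3 = (real (snd (fst b)) + snd q) / 3)"

definition glue_rel :: "'a squams \<Rightarrow> (((nat \<times> nat) \<times> 'a) \<times> ((nat \<times> nat) \<times> 'a)) set" where
  "glue_rel X = {(a, b). a \<in> Mset \<times> carr X \<and> b \<in> Mset \<times> carr X \<and> equivclp (glue_gen X) a b}"

definition tcls :: "'a squams \<Rightarrow> nat \<times> nat \<Rightarrow> 'a \<Rightarrow> ((nat \<times> nat) \<times> 'a) set" where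
  "tcls X m x = glue_rel X `` {(m, x)}"

definition dMX :: "'a squams \<Rightarrow> (nat \<times> nat) \<times> 'a \<Rightarrow> (nat \<times> nat) \<times> 'a \<Rightarrow> real" where
  "dMX X a b = (if fst a = fst b then dst X (snd a) (snd b) / 3 else 2)"

definition chain_cost :: "'a squams \<Rightarrow> ((nat \<times> nat) \<times> 'a) list \<Rightarrow> real" where
  "chain_cost X zs =
     sum_list (map (\<lambda>(a, b). if (a, b) \<in> glue_rel X then 0 else dMX X a b) (zip zs (tl zs)))"

definition tdist :: "'a squams \<Rightarrow> ((nat \<times> nat) \<times> 'a) set \<Rightarrow> ((nat \<times> nat) \<times> 'a) set \<Rightarrow> real" where
  "tdist X P Q = Inf {chain_cost X zs | zs. zs \<noteq> [] \<and> set zs \<subseteq> Mset \<times> carr X \<and>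
                                        hd zs \<in> P \<and> last zs \<in> Q}"

definition subsq :: "nat \<times> nat \<Rightarrow> (real \<times> real) set" where
  "subsq m = {((real (fst m) + x) / 3, (real (snd m) + y) / 3) | x y. x \<in> {0..1} \<and> y \<in> {0..1}}"

definition tS :: "'a squams \<Rightarrow> real \<times> real \<Rightarrow> ((nat \<times> nat) \<times> 'a) set" where
  "tS X p = (let m = (SOME m. m \<in> Mset \<and> p \<in> subsq m) in
               tcls X m (sqm X (3 * fst p - real (fst m), 3 * snd p - real (snd m))))"

definition tensor :: "'a squams \<Rightarrow> ((nat \<times> nat) \<times> 'a) set squams" where
  "tensor X = ((Mset \<times> carr X) // glue_rel X, tdist X, tS X)"

definition tensor_map :: "'a squams \<Rightarrow> 'b squams \<Rightarrow> ('a \<Rightarrow> 'b)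
      \<Rightarrow> ((nat \<times> nat) \<times> 'a) set \<Rightarrow> ((nat \<times> nat) \<times> 'b) set" where
  "tensor_map X Y f c = (let z = (SOME z. z \<in> c) in tcls Y (fst z) (f (snd z)))"

definition is_alg :: "'a squams \<Rightarrow> (((nat \<times> nat) \<times> 'a) set \<Rightarrow> 'a) \<Rightarrow> bool" where
  "is_alg X \<alpha> \<longleftrightarrow> is_squams X \<and> is_mor (tensor X) X \<alpha>"

definition is_alg_mor :: "'a squams \<Rightarrow> (((nat \<times> nat) \<times> 'a) set \<Rightarrow> 'a)
      \<Rightarrow> 'b squams \<Rightarrow> (((nat \<times> nat) \<times> 'b) set \<Rightarrow> 'b) \<Rightarrow> ('a \<Rightarrow> 'b) \<Rightarrow> bool" where
  "is_alg_mor X \<alpha> Y \<beta> h \<longleftrightarrow> is_mor X Y h \<and>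
     (\<forall>c\<in>carr (tensor X). h (\<alpha> c) = \<beta> (tensor_map X Y h c))"

text \<open>Initial algebra; the test algebras range over all square metric spaces whose carrier
  is a subset of the type of G. Uniqueness is on the carrier.\<close>
definition is_initial_alg :: "'a squams \<Rightarrow> (((nat \<times> nat) \<times> 'a) set \<Rightarrow> 'a) \<Rightarrow> bool" where
  "is_initial_alg G \<eta> \<longleftrightarrow> is_alg G \<eta> \<and>
     (\<forall>(X :: 'a squams) \<alpha>. is_alg X \<alpha> \<longrightarrow>
        (\<exists>h. is_alg_mor G \<eta> X \<alpha> h \<and>
             (\<forall>h'. is_alg_mor G \<eta> X \<alpha> h' \<longrightarrow> (\<forall>x\<in>carr G. h' x = h x))))"

definition cauchy_eqv :: "'a squams \<Rightarrow> ((nat \<Rightarrow> 'a) \<times> (nat \<Rightarrow> 'a)) set" where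
  "cauchy_eqv X = {(x, y). Metric_space.MCauchy (carr X) (dst X) x \<and>
                          Metric_space.MCauchy (carr X) (dst X) y \<and>
                          (\<lambda>n. dst X (x n) (y n)) \<longlonglongrightarrow> 0}"

definition compl_carr :: "'a squams \<Rightarrow> (nat \<Rightarrow> 'a) set set" where
  "compl_carr X = {x. Metric_space.MCauchy (carr X) (dst X) x} // cauchy_eqv X"

definition compl_dist :: "'a squams \<Rightarrow> (nat \<Rightarrow> 'a) set \<Rightarrow> (nat \<Rightarrow> 'a) set \<Rightarrow> real" where
  "compl_dist X P Q = lim (\<lambda>n. dst X ((SOME x. x \<in> P) n) ((SOME y. y \<in> Q) n))"

definition compl_S :: "'a squams \<Rightarrow> real \<times> real \<Rightarrow> (nat \<Rightarrow> 'a) set" where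
  "compl_S X p = cauchy_eqv X `` {(\<lambda>_. sqm X p)}"

definition cauchy_completion :: "'a squams \<Rightarrow> (nat \<Rightarrow> 'a) set squams" where
  "cauchy_completion X = (compl_carr X, compl_dist X, compl_S X)"

definition carpet :: "(real \<times> real) set" where
  "carpet = (THE K. K \<noteq> {} \<and> compact K \<and> K \<subseteq> {0..1} \<times> {0..1} \<and>
      K = (\<Union>m\<in>Mset. (\<lambda>(x, y). ((real (fst m) + x) / 3, (real (snd m) + y) / 3)) ` K))"

definition taxicab :: "real \<times> real \<Rightarrow> real \<times> real \<Rightarrow> real" where
  "taxicab p q = \<bar>fst p - fst q\<bar> + \<bar>snd p - snd q\<bar>"

definition bilipschitz_equiv :: "'a set \<Rightarrow> ('a \<Rightarrow> 'a \<Rightarrow> real) \<Rightarrow> 'b set \<Rightarrow> ('b \<Rightarrow> 'b \<Rightarrow> real) \<Rightarrow> bool" where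
  "bilipschitz_equiv A dA B dB \<longleftrightarrow>
     (\<exists>f K. bij_betw f A B \<and> K \<ge> 1 \<and>
        (\<forall>x\<in>A. \<forall>y\<in>A. dA x y / K \<le> dB (f x) (f y) \<and> dB (f x) (f y) \<le> K * dA x y))"

end

theory Submission
  imports Defs
begin

text \<open>
  Initiality yields a short algebra morphism from \<open>G\<close> to the unit square with the taxicab metric,
  whose structure map sends \<open>m \<otimes> p\<close> to \<open>(m + p)/3\<close>. The resulting coordinate map \<open>coord\<close> fixes the
  boundary and commutes with the carpet contractions, so the closure of its image is a compact
  nonempty fixpoint of the Hutchinson operator of the carpet, i.e. the carpet itself.
  Initiality also shows that \<open>G\<close> is generated by its boundary under \<open>\<eta>\<close>; induction on the generation
  depth gives the reverse estimate \<open>d x y \<le> 6 |coord x - coord y|\<^sub>1\<close>. Hence \<open>coord\<close> is bilipschitz,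
  and its extension to the completion is a bilipschitz bijection onto the closure of its image.
\<close>

section \<open>Cells of the unit square\<close>

lemma M0_iff: "p \<in> M0 \<longleftrightarrow> fst p \<in> {0..1} \<and> snd p \<in> {0..1} \<and> (fst p \<in> {0,1} \<or> snd p \<in> {0,1})"
  by (cases p) (auto simp: M0_def)

lemma Mset_iff: "m \<in> Mset \<longleftrightarrow> fst m \<le> 2 \<and> snd m \<le> 2 \<and> m \<noteq> (1,1)"
proof -
  have "a \<le> 2 \<longleftrightarrow> a \<in> {0,1,2}" for a :: nat by auto
  then show ?thesis by (cases m) (auto simp: Mset_def)
qed

lemma finite_Mset: "finite Mset"
  by (simp add: Mset_def)

definition unit_square :: "(real \<times> real) set" where
  "unit_square = {0..1} \<times> {0..1}"

definition carpet_map :: "nat \<times> nat \<Rightarrow> real \<times> real \<Rightarrow> real \<times> real" where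
  "carpet_map m p = ((real (fst m) + fst p) / 3, (real (snd m) + snd p) / 3)"

lemma mem_unit_square: "p \<in> unit_square \<longleftrightarrow> fst p \<in> {0..1} \<and> snd p \<in> {0..1}"
  by (cases p) (auto simp: unit_square_def)

lemma M0_subset_unit_square: "M0 \<subseteq> unit_square"
  by (auto simp: M0_iff mem_unit_square)

lemma compact_unit_square: "compact unit_square"
  unfolding unit_square_def by (intro compact_Times compact_Icc)

lemma carpet_map_in_unit_square: "m \<in> Mset \<Longrightarrow> p \<in> unit_square \<Longrightarrow> carpet_map m p \<in> unit_square"
  by (auto simp: carpet_map_def mem_unit_square Mset_iff)

lemma carpet_map_eq_iff:
  "carpet_map m p = carpet_map n q \<longleftrightarrow>
     real (fst m) + fst p = real (fst n) + fst q \<and> real (snd m) + snd p = real (snd n) + snd q"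
  by (auto simp: carpet_map_def)

lemma continuous_on_carpet_map: "continuous_on S (carpet_map m)"
  unfolding carpet_map_def by (intro continuous_intros) auto

lemma mem_subsq_iff:
  "p \<in> subsq m \<longleftrightarrow> 3 * fst p - real (fst m) \<in> {0..1} \<and> 3 * snd p - real (snd m) \<in> {0..1}"
proof
  assume "p \<in> subsq m"
  then show "3 * fst p - real (fst m) \<in> {0..1} \<and> 3 * snd p - real (snd m) \<in> {0..1}"
    by (auto simp: subsq_def field_simps)
next
  assume "3 * fst p - real (fst m) \<in> {0..1} \<and> 3 * snd p - real (snd m) \<in> {0..1}"
  then show "p \<in> subsq m" unfolding subsq_def
    by (intro CollectI exI[of _ "3 * fst p - real (fst m)"] exI[of _ "3 * snd p - real (snd m)"])
       (cases p, auto)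
qed

lemma M0_in_subsq:
  assumes "p \<in> M0"
  shows "\<exists>m\<in>Mset. p \<in> subsq m"
proof -
  define f :: "real \<Rightarrow> nat" where "f t = (if t < 1/3 then 0 else if t < 2/3 then 1 else 2)" for t
  have p: "fst p \<in> {0..1}" "snd p \<in> {0..1}" "fst p \<in> {0,1} \<or> snd p \<in> {0,1}"
    using assms by (auto simp: M0_iff)
  have "(f (fst p), f (snd p)) \<in> Mset" using p by (auto simp: f_def Mset_iff)
  moreover have "p \<in> subsq (f (fst p), f (snd p))" using p by (auto simp: f_def mem_subsq_iff)
  ultimately show ?thesis by blast
qed

definition cell_index :: "real \<times> real \<Rightarrow> nat \<times> nat" where
  "cell_index p = (SOME m. m \<in> Mset \<and> p \<in> subsq m)"

definition cell_point :: "real \<times> real \<Rightarrow> real \<times> real" where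
  "cell_point p = (3 * fst p - real (fst (cell_index p)), 3 * snd p - real (snd (cell_index p)))"

lemma M0_cell:
  assumes "p \<in> M0"
  shows "cell_index p \<in> Mset" "cell_point p \<in> M0" "p = carpet_map (cell_index p) (cell_point p)"
proof -
  have m: "cell_index p \<in> Mset \<and> p \<in> subsq (cell_index p)"
    using someI_ex[OF M0_in_subsq[OF assms, unfolded Bex_def]] by (simp add: cell_index_def)
  then show "cell_index p \<in> Mset" by simp
  have "fst p \<in> {0,1} \<or> snd p \<in> {0,1}" using assms by (auto simp: M0_iff)
  with m show "cell_point p \<in> M0"
    by (auto simp: cell_point_def M0_iff mem_subsq_iff Mset_iff)
  show "p = carpet_map (cell_index p) (cell_point p)" by (simp add: carpet_map_def cell_point_def)
qed

section \<open>Taxicab geometry\<close>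

lemma taxicab_commute: "taxicab p q = taxicab q p"
  by (simp add: taxicab_def abs_minus_commute)

lemma taxicab_nonneg: "0 \<le> taxicab p q"
  by (simp add: taxicab_def)

lemma taxicab_eq_0_iff: "taxicab p q = 0 \<longleftrightarrow> p = q"
  by (cases p; cases q) (auto simp: taxicab_def)

lemma taxicab_triangle: "taxicab p r \<le> taxicab p q + taxicab q r"
  by (simp add: taxicab_def)

lemma taxicab_le_2: "p \<in> unit_square \<Longrightarrow> q \<in> unit_square \<Longrightarrow> taxicab p q \<le> 2"
  by (auto simp: taxicab_def mem_unit_square abs_le_iff)

lemma dist_le_taxicab: "dist p q \<le> taxicab p q"
proof -
  have "dist p q = sqrt ((dist (fst p) (fst q))\<^sup>2 + (dist (snd p) (snd q))\<^sup>2)"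
    by (cases p; cases q) (simp add: dist_Pair_Pair)
  also have "\<dots> \<le> dist (fst p) (fst q) + dist (snd p) (snd q)"
    by (rule sqrt_sum_squares_le_sum) simp_all
  finally show ?thesis by (simp add: taxicab_def dist_real_def)
qed

lemma taxicab_le_2_dist: "taxicab p q \<le> 2 * dist p q"
proof -
  have "dist p q = sqrt ((dist (fst p) (fst q))\<^sup>2 + (dist (snd p) (snd q))\<^sup>2)"
    by (cases p; cases q) (simp add: dist_Pair_Pair)
  then have "dist (fst p) (fst q) \<le> dist p q" "dist (snd p) (snd q) \<le> dist p q"
    by (auto intro!: real_le_rsqrt)
  then show ?thesis by (simp add: taxicab_def dist_real_def)
qed

lemma taxicab_carpet_map: "taxicab (carpet_map m p) (carpet_map m q) = taxicab p q / 3"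
  by (simp add: taxicab_def carpet_map_def diff_divide_distrib[symmetric] add_divide_distrib[symmetric])

lemma nat_plus_unit_eq_cases:
  fixes a b :: nat and x y :: real
  assumes "real a + x = real b + y" "x \<in> {0..1}" "y \<in> {0..1}"
  shows "(a = b \<and> x = y) \<or> (a = b + 1 \<and> x = 0 \<and> y = 1) \<or> (b = a + 1 \<and> x = 1 \<and> y = 0)"
proof -
  consider "a = b" | "a \<ge> b + 1" | "b \<ge> a + 1" by linarith
  then show ?thesis
  proof cases
    case 2
    then have "real a \<ge> real b + 1" by simp
    then show ?thesis using assms by auto
  next
    case 3
    then have "real b \<ge> real a + 1" by simp
    then show ?thesis using assms by auto
  qed (use assms in simp)
qed

lemma real_nat_dist_cases:
  fixes i j :: nat
  shows "\<bar>real i - real j\<bar> \<le> 1 \<or> 2 \<le> \<bar>real i - real j\<bar>"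
proof -
  have "i \<le> j + 1 \<and> j \<le> i + 1 \<or> j + 2 \<le> i \<or> i + 2 \<le> j" by linarith
  then have "real i \<le> real j + 1 \<and> real j \<le> real i + 1 \<or> real j + 2 \<le> real i \<or> real i + 2 \<le> real j"
    by (metis of_nat_add of_nat_le_iff of_nat_1 of_nat_numeral)
  then show ?thesis by linarith
qed

lemma interval_junction:
  fixes i j :: nat and t s :: real
  assumes "\<bar>real i - real j\<bar> \<le> 1" "t \<in> {0..1}" "s \<in> {0..1}"
  obtains u v where "u \<in> {0..1}" "v \<in> {0..1}" "real i + u = real j + v" "i \<noteq> j \<Longrightarrow> u \<in> {0,1} \<and> v \<in> {0,1}"
    "\<bar>t - u\<bar> + \<bar>v - s\<bar> = \<bar>(real i + t) - (real j + s)\<bar>"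
proof -
  consider "i = j" | "j = i + 1" | "i = j + 1" using assms(1) by linarith
  then show thesis
  proof cases
    case 1 then show thesis using that[of t t] assms by simp
  next
    case 2 then show thesis using that[of 1 0] assms by auto
  next
    case 3 then show thesis using that[of 0 1] assms by auto
  qed
qed

lemma carpet_map_junction:
  assumes "m \<noteq> n" "\<bar>real (fst m) - real (fst n)\<bar> \<le> 1" "\<bar>real (snd m) - real (snd n)\<bar> \<le> 1"
    and a: "a \<in> unit_square" and b: "b \<in> unit_square"
  obtains p q where "p \<in> M0" "q \<in> M0" "carpet_map m p = carpet_map n q"
    "taxicab (carpet_map m a) (carpet_map m p) + taxicab (carpet_map n q) (carpet_map n b)
       = taxicab (carpet_map m a) (carpet_map n b)"
proof -
  obtain u1 v1 where fst_junction: "u1 \<in> {0..1}" "v1 \<in> {0..1}" "real (fst m) + u1 = real (fst n) + v1"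
    "fst m \<noteq> fst n \<Longrightarrow> u1 \<in> {0,1} \<and> v1 \<in> {0,1}"
    "\<bar>fst a - u1\<bar> + \<bar>v1 - fst b\<bar> = \<bar>(real (fst m) + fst a) - (real (fst n) + fst b)\<bar>"
    using interval_junction[OF assms(2), of "fst a" "fst b"] a b unfolding mem_unit_square by blast
  obtain u2 v2 where snd_junction: "u2 \<in> {0..1}" "v2 \<in> {0..1}" "real (snd m) + u2 = real (snd n) + v2"
    "snd m \<noteq> snd n \<Longrightarrow> u2 \<in> {0,1} \<and> v2 \<in> {0,1}"
    "\<bar>snd a - u2\<bar> + \<bar>v2 - snd b\<bar> = \<bar>(real (snd m) + snd a) - (real (snd n) + snd b)\<bar>"
    using interval_junction[OF assms(3), of "snd a" "snd b"] a b unfolding mem_unit_square by blast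
  have "fst m \<noteq> fst n \<or> snd m \<noteq> snd n" using assms(1) by (simp add: prod_eq_iff)
  then have "(u1, u2) \<in> M0" "(v1, v2) \<in> M0" using fst_junction snd_junction by (auto simp: M0_iff)
  moreover have "carpet_map m (u1, u2) = carpet_map n (v1, v2)"
    using fst_junction snd_junction by (simp add: carpet_map_eq_iff)
  moreover have "taxicab (carpet_map m a) (carpet_map m (u1, u2))
      + taxicab (carpet_map n (v1, v2)) (carpet_map n b)
       = taxicab (carpet_map m a) (carpet_map n b)"
  proof -
    have div3: "\<bar>x / 3 - y / 3\<bar> = \<bar>x - y\<bar> / 3" for x y :: real
      by (simp add: diff_divide_distrib[symmetric])
    show ?thesis
      unfolding taxicab_carpet_map unfolding taxicab_def carpet_map_def fst_conv snd_conv div3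
        fst_junction(5)[symmetric] snd_junction(5)[symmetric]
      by (simp add: field_simps)
  qed
  ultimately show thesis using that by blast
qed

lemma taxicab_carpet_map_far:
  assumes "2 \<le> \<bar>real (fst m) - real (fst n)\<bar> \<or> 2 \<le> \<bar>real (snd m) - real (snd n)\<bar>"
    and "a \<in> unit_square" "b \<in> unit_square"
  shows "1/3 \<le> taxicab (carpet_map m a) (carpet_map n b)"
proof -
  have far: "1/3 \<le> \<bar>(real i + s) / 3 - (real j + t) / 3\<bar>"
    if "2 \<le> \<bar>real i - real j\<bar>" "s \<in> {0..1}" "t \<in> {0..1}" for i j :: nat and s t :: real
  proof -
    have "\<bar>(real i + s) / 3 - (real j + t) / 3\<bar> = \<bar>(real i - real j) + (s - t)\<bar> / 3"
      by (simp add: diff_divide_distrib[symmetric] algebra_simps)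
    then show ?thesis using that by (auto simp: abs_if split: if_splits)
  qed
  have "\<bar>fst (carpet_map m a) - fst (carpet_map n b)\<bar> \<le> taxicab (carpet_map m a) (carpet_map n b)"
    "\<bar>snd (carpet_map m a) - snd (carpet_map n b)\<bar> \<le> taxicab (carpet_map m a) (carpet_map n b)"
    by (simp_all add: taxicab_def)
  then show ?thesis
    using assms far[of "fst m" "fst n" "fst a" "fst b"] far[of "snd m" "snd n" "snd a" "snd b"]
    by (auto simp: carpet_map_def mem_unit_square)
qed

section \<open>The functor \<open>M \<otimes> -\<close>\<close>

lemma carr_tensor: "carr (tensor X) = (Mset \<times> carr X) // glue_rel X"
  and dst_tensor: "dst (tensor X) = tdist X"
  and sqm_tensor: "sqm (tensor X) = tS X"
  by (simp_all add: tensor_def carr_def dst_def sqm_def)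

lemma equiv_glue_rel: "equiv (Mset \<times> carr X) (glue_rel X)"
  by (rule equivI)
    (auto simp: refl_on_def sym_def trans_def glue_rel_def intro: equivclp_sym equivclp_trans)

lemma equivclp_invariant:
  assumes "equivclp R a b" and "\<And>x y. R x y \<Longrightarrow> f x = f y"
  shows "f a = f b"
  using assms(1) by induct (auto dest: assms(2))

lemma tcls_in_tensor: "m \<in> Mset \<Longrightarrow> x \<in> carr X \<Longrightarrow> tcls X m x \<in> carr (tensor X)"
  unfolding carr_tensor tcls_def by (intro quotientI) auto

lemma tcls_self: "m \<in> Mset \<Longrightarrow> x \<in> carr X \<Longrightarrow> (m, x) \<in> tcls X m x"
  unfolding tcls_def glue_rel_def by auto

lemma tensor_carrE:
  assumes "c \<in> carr (tensor X)"
  obtains m x where "m \<in> Mset" "x \<in> carr X" "c = tcls X m x"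
  using assms unfolding carr_tensor tcls_def by (auto elim!: quotientE)

lemma some_in_tensor_carr: "c \<in> carr (tensor X) \<Longrightarrow> (SOME z. z \<in> c) \<in> c"
  by (metis tensor_carrE tcls_self someI)

lemma tcls_eqI:
  assumes "equivclp (glue_gen X) (m, x) (n, y)" "m \<in> Mset" "n \<in> Mset" "x \<in> carr X" "y \<in> carr X"
  shows "tcls X m x = tcls X n y"
proof -
  have "((m, x), (n, y)) \<in> glue_rel X" using assms unfolding glue_rel_def by auto
  then show ?thesis unfolding tcls_def by (metis equiv_class_eq_iff equiv_glue_rel)
qed

lemma tcls_invariant:
  assumes "\<And>a b. glue_gen X a b \<Longrightarrow> f a = f b" and "z \<in> tcls X m x"
  shows "f z = f (m, x)"
proof -
  have "equivclp (glue_gen X) (m, x) z" using assms(2) unfolding tcls_def glue_rel_def by auto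
  then show ?thesis by (metis equivclp_invariant assms(1))
qed

lemma tensor_carr_mem:
  assumes "c \<in> carr (tensor X)" "z \<in> c"
  shows "c = tcls X (fst z) (snd z)" "fst z \<in> Mset" "snd z \<in> carr X"
proof -
  obtain m x where mx: "m \<in> Mset" "x \<in> carr X" "c = tcls X m x"
    using assms(1) by (rule tensor_carrE)
  have zr: "((m, x), z) \<in> glue_rel X" using assms(2) mx unfolding tcls_def by auto
  then show "fst z \<in> Mset" "snd z \<in> carr X" unfolding glue_rel_def by auto
  have "glue_rel X `` {z} = glue_rel X `` {(m, x)}"
    using zr equiv_glue_rel by (metis equiv_class_eq_iff prod.collapse)
  then show "c = tcls X (fst z) (snd z)" using mx unfolding tcls_def by simp
qed

lemma tS_eq: "tS X p = tcls X (cell_index p) (sqm X (cell_point p))"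
  by (simp add: tS_def Let_def cell_index_def[symmetric] cell_point_def)

lemma glue_gen_sqmI:
  assumes "m \<in> Mset" "n \<in> Mset" "adjacent m n" "p \<in> M0" "q \<in> M0" "carpet_map m p = carpet_map n q"
  shows "glue_gen X (m, sqm X p) (n, sqm X q)"
  using assms unfolding glue_gen_def carpet_map_def by auto

lemma tcls_sqm_eq_via:
  assumes S: "sqm X ` M0 \<subseteq> carr X" and m: "m \<in> Mset" and n: "n \<in> Mset"
    and p: "p \<in> M0" and q: "q \<in> M0" and k: "k \<in> Mset" and r: "r \<in> M0"
    and adj: "adjacent m k" "adjacent k n"
    and eq: "carpet_map m p = carpet_map k r" "carpet_map k r = carpet_map n q"
  shows "tcls X m (sqm X p) = tcls X n (sqm X q)"
proof -
  have "glue_gen X (m, sqm X p) (k, sqm X r)" "glue_gen X (k, sqm X r) (n, sqm X q)"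
    using glue_gen_sqmI m n p q k r adj eq by blast+
  then have "equivclp (glue_gen X) (m, sqm X p) (n, sqm X q)"
    by (meson equivclp_trans r_into_equivclp)
  then show ?thesis using m n p q S by (intro tcls_eqI) auto
qed

text \<open>Two cells meeting only at a corner are glued through a third cell sharing an edge with both.\<close>
lemma tcls_sqm_eq:
  assumes S: "sqm X ` M0 \<subseteq> carr X" and m: "m \<in> Mset" and n: "n \<in> Mset"
    and p: "p \<in> M0" and q: "q \<in> M0" and eq: "carpet_map m p = carpet_map n q"
  shows "tcls X m (sqm X p) = tcls X n (sqm X q)"
proof -
  have Sp: "sqm X p \<in> carr X" and Sq: "sqm X q \<in> carr X" using S p q by auto
  have e1: "real (fst m) + fst p = real (fst n) + fst q"
    and e2: "real (snd m) + snd p = real (snd n) + snd q"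
    using eq by (auto simp: carpet_map_eq_iff)
  have pq01: "fst p \<in> {0..1}" "snd p \<in> {0..1}" "fst q \<in> {0..1}" "snd q \<in> {0..1}"
    using p q by (auto simp: M0_iff)
  note c1 = nat_plus_unit_eq_cases[OF e1 pq01(1,3)]
  note c2 = nat_plus_unit_eq_cases[OF e2 pq01(2,4)]
  note via = tcls_sqm_eq_via[OF S m n p q]
  consider "m = n" | "adjacent m n" | "fst m \<noteq> fst n" "snd m \<noteq> snd n"
    using c1 c2 by (cases m, cases n) (auto simp: adjacent_def)
  then show ?thesis
  proof cases
    case 1
    then have "p = q" using e1 e2 by (simp add: prod_eq_iff)
    with 1 show ?thesis by simp
  next
    case 2
    then show ?thesis using glue_gen_sqmI[OF m n 2 p q eq, of X] m n Sp Sq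
      by (intro tcls_eqI) auto
  next
    case 3
    have a1: "\<bar>real (fst m) - real (fst n)\<bar> = 1" and a2: "\<bar>real (snd m) - real (snd n)\<bar> = 1"
      and corner: "fst p \<in> {0,1}" "fst q \<in> {0,1}" "snd p \<in> {0,1}" "snd q \<in> {0,1}"
      using c1 c2 3 by auto
    show ?thesis
    proof (cases "(fst n, snd m) \<in> Mset")
      case True
      show ?thesis
        by (rule via[OF True, of "(fst q, snd p)"])
          (use corner pq01 a1 a2 e1 e2 in
            \<open>auto simp: M0_iff adjacent_def carpet_map_eq_iff abs_minus_commute\<close>)
    next
      case False
      then have "(fst m, snd n) \<in> Mset" using m n 3 by (auto simp: Mset_iff)
      then show ?thesis
        by (rule via[of _ "(fst p, snd q)"])
          (use corner pq01 a1 a2 e1 e2 in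
            \<open>auto simp: M0_iff adjacent_def carpet_map_eq_iff abs_minus_commute\<close>)
    qed
  qed
qed

lemma chain_cost_Cons2:
  "chain_cost X (a # b # zs) = (if (a, b) \<in> glue_rel X then 0 else dMX X a b) + chain_cost X (b # zs)"
  by (simp add: chain_cost_def)

lemma chain_cost_nonneg:
  assumes "Metric_space (carr X) (dst X)"
  shows "0 \<le> chain_cost X zs"
  unfolding chain_cost_def
  by (rule sum_list_nonneg) (auto simp: dMX_def Metric_space.nonneg[OF assms])

lemma tdist_le_chain_cost:
  assumes "Metric_space (carr X) (dst X)"
    and "zs \<noteq> []" "set zs \<subseteq> Mset \<times> carr X" "hd zs \<in> c" "last zs \<in> c'"
  shows "tdist X c c' \<le> chain_cost X zs"
  unfolding tdist_def
  by (rule cInf_lower) (use assms chain_cost_nonneg[OF assms(1)] in \<open>auto intro!: bdd_belowI[of _ 0]\<close>)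

lemma tdist_greatest:
  assumes c: "c \<in> carr (tensor X)" and c': "c' \<in> carr (tensor X)"
    and B: "\<And>zs. zs \<noteq> [] \<Longrightarrow> set zs \<subseteq> Mset \<times> carr X \<Longrightarrow> hd zs \<in> c \<Longrightarrow> last zs \<in> c' \<Longrightarrow> B \<le> chain_cost X zs"
  shows "B \<le> tdist X c c'"
proof -
  obtain m x where mx: "m \<in> Mset" "x \<in> carr X" "c = tcls X m x"
    using c by (rule tensor_carrE)
  obtain m' x' where mx': "m' \<in> Mset" "x' \<in> carr X" "c' = tcls X m' x'"
    using c' by (rule tensor_carrE)
  let ?zs = "[(m, x), (m', x')]"
  have "?zs \<noteq> [] \<and> set ?zs \<subseteq> Mset \<times> carr X \<and> hd ?zs \<in> c \<and> last ?zs \<in> c'"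
    using mx mx' tcls_self[OF mx(1,2)] tcls_self[OF mx'(1,2)] by simp
  then have "{chain_cost X zs | zs. zs \<noteq> [] \<and> set zs \<subseteq> Mset \<times> carr X \<and> hd zs \<in> c \<and> last zs \<in> c'} \<noteq> {}"
    by blast
  then show ?thesis
    unfolding tdist_def by (rule cInf_greatest) (use B in blast)
qed

section \<open>Square metric spaces and their algebras\<close>

lemma squams_metric: "is_squams X \<Longrightarrow> Metric_space (carr X) (dst X)"
  and squams_sqm_in: "is_squams X \<Longrightarrow> p \<in> M0 \<Longrightarrow> sqm X p \<in> carr X"
  and squams_dst_le_2: "is_squams X \<Longrightarrow> x \<in> carr X \<Longrightarrow> y \<in> carr X \<Longrightarrow> dst X x y \<le> 2"
  unfolding is_squams_def by (elim conjE; blast)+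

lemma squams_dst_side:
  assumes "is_squams X" "i \<in> {0,1}" "r \<in> {0..1}" "s \<in> {0..1}"
  shows "dst X (sqm X (i, r)) (sqm X (i, s)) = \<bar>s - r\<bar>" "dst X (sqm X (r, i)) (sqm X (s, i)) = \<bar>s - r\<bar>"
proof -
  have "\<forall>i\<in>{0,1}. \<forall>r\<in>{0..1}. \<forall>s\<in>{0..1}.
      dst X (sqm X (i, r)) (sqm X (i, s)) = \<bar>s - r\<bar> \<and> dst X (sqm X (r, i)) (sqm X (s, i)) = \<bar>s - r\<bar>"
    using assms(1) unfolding is_squams_def by (elim conjE) assumption
  then show "dst X (sqm X (i, r)) (sqm X (i, s)) = \<bar>s - r\<bar>"
    "dst X (sqm X (r, i)) (sqm X (s, i)) = \<bar>s - r\<bar>"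
    using assms(2-4) by blast+
qed

lemma squams_dst_sqm_le_taxicab_or_far:
  assumes X: "is_squams X" and p: "p \<in> M0" and q: "q \<in> M0"
  shows "dst X (sqm X p) (sqm X q) \<le> taxicab p q \<or> 1 \<le> taxicab p q"
proof -
  obtain p1 p2 q1 q2 where pq: "p = (p1, p2)" "q = (q1, q2)" by (cases p, cases q)
  have r: "p1 \<in> {0..1}" "p2 \<in> {0..1}" "q1 \<in> {0..1}" "q2 \<in> {0..1}"
    and bp: "p1 \<in> {0,1} \<or> p2 \<in> {0,1}" and bq: "q1 \<in> {0,1} \<or> q2 \<in> {0,1}"
    using p q pq by (auto simp: M0_iff)
  have tx: "taxicab p q = \<bar>p1 - q1\<bar> + \<bar>p2 - q2\<bar>" using pq by (simp add: taxicab_def)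
  note side = squams_dst_side[OF X]
  have tri: "dst X (sqm X p) (sqm X q) \<le> dst X (sqm X p) (sqm X c) + dst X (sqm X c) (sqm X q)"
    if "c \<in> M0" for c
    using Metric_space.triangle[OF squams_metric[OF X]] squams_sqm_in[OF X] p q that by blast
  \<comment> \<open>Points on opposite sides are at taxicab distance \<open>\<ge> 1\<close>; otherwise one or two sides join them.\<close>
  consider "p1 \<in> {0,1}" "q1 \<in> {0,1}" | "p2 \<in> {0,1}" "q2 \<in> {0,1}"
    | "p1 \<in> {0,1}" "q2 \<in> {0,1}" | "p2 \<in> {0,1}" "q1 \<in> {0,1}"
    using bp bq by blast
  then show ?thesis
  proof cases
    case 1
    then show ?thesis
      using side(1)[of p1 p2 q2] r tx pq by (cases "p1 = q1") (auto simp: abs_minus_commute)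
  next
    case 2
    then show ?thesis
      using side(2)[of p2 p1 q1] r tx pq by (cases "p2 = q2") (auto simp: abs_minus_commute)
  next
    case 3
    then have "(p1, q2) \<in> M0" using r by (auto simp: M0_iff)
    then show ?thesis
      using tri[of "(p1, q2)"] side(1)[of p1 p2 q2] side(2)[of q2 p1 q1] 3 r tx pq
      by (simp add: abs_minus_commute)
  next
    case 4
    then have "(q1, p2) \<in> M0" using r by (auto simp: M0_iff)
    then show ?thesis
      using tri[of "(q1, p2)"] side(2)[of p2 p1 q1] side(1)[of q1 p2 q2] 4 r tx pq
      by (simp add: abs_minus_commute)
  qed
qed

lemma squams_dst_sqm_le:
  assumes X: "is_squams X" and p: "p \<in> M0" and q: "q \<in> M0"
  shows "dst X (sqm X p) (sqm X q) \<le> 2 * taxicab p q"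
proof -
  have "dst X (sqm X p) (sqm X q) \<le> 2"
    using squams_dst_le_2[OF X] squams_sqm_in[OF X] p q by blast
  then show ?thesis
    using squams_dst_sqm_le_taxicab_or_far[OF X p q] taxicab_nonneg[of p q] by linarith
qed

context
  fixes X :: "'a squams" and \<alpha> :: "((nat \<times> nat) \<times> 'a) set \<Rightarrow> 'a"
  assumes alg: "is_alg X \<alpha>"
begin

lemma alg_squams: "is_squams X"
  using alg by (simp add: is_alg_def)

lemmas alg_metric = squams_metric[OF alg_squams]

lemma alg_mor: "is_mor (tensor X) X \<alpha>"
  using alg by (simp add: is_alg_def)

lemma alg_tcls_in: "m \<in> Mset \<Longrightarrow> x \<in> carr X \<Longrightarrow> \<alpha> (tcls X m x) \<in> carr X"
  using alg_mor tcls_in_tensor unfolding is_mor_def by (meson image_subset_iff)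

lemma alg_dst_le_tdist:
  "c \<in> carr (tensor X) \<Longrightarrow> c' \<in> carr (tensor X) \<Longrightarrow> dst X (\<alpha> c) (\<alpha> c') \<le> tdist X c c'"
  using alg_mor unfolding is_mor_def dst_tensor by blast

lemma alg_tS: "p \<in> M0 \<Longrightarrow> \<alpha> (tS X p) = sqm X p"
  using alg_mor unfolding is_mor_def sqm_tensor by blast

lemma alg_sqm_eq_tcls: "p \<in> M0 \<Longrightarrow> sqm X p = \<alpha> (tcls X (cell_index p) (sqm X (cell_point p)))"
  using alg_tS by (simp add: tS_eq)

lemma alg_dst_same_cell:
  assumes "m \<in> Mset" "x \<in> carr X" "y \<in> carr X"
  shows "dst X (\<alpha> (tcls X m x)) (\<alpha> (tcls X m y)) \<le> dst X x y / 3"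
proof -
  have "dst X (\<alpha> (tcls X m x)) (\<alpha> (tcls X m y)) \<le> tdist X (tcls X m x) (tcls X m y)"
    using assms by (intro alg_dst_le_tdist tcls_in_tensor)
  also have "\<dots> \<le> chain_cost X [(m, x), (m, y)]"
    using assms by (intro tdist_le_chain_cost alg_metric) (auto intro: tcls_self)
  also have "\<dots> \<le> dst X x y / 3"
    using Metric_space.nonneg[OF alg_metric] by (simp add: chain_cost_def dMX_def)
  finally show ?thesis .
qed

lemma is_alg_mor_id: "is_alg_mor X \<alpha> X \<alpha> (\<lambda>x. x)"
  unfolding is_alg_mor_def is_mor_def
proof (intro conjI ballI)
  fix c assume c: "c \<in> carr (tensor X)"
  show "\<alpha> c = \<alpha> (tensor_map X X (\<lambda>x. x) c)"
    using tensor_carr_mem(1)[OF c some_in_tensor_carr[OF c]] by (simp add: tensor_map_def Let_def)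
qed simp_all

end

definition sub_squams :: "'a squams \<Rightarrow> 'a set \<Rightarrow> 'a squams" where
  "sub_squams X B = (B, dst X, sqm X)"

lemma carr_sub_squams: "carr (sub_squams X B) = B"
  and dst_sub_squams: "dst (sub_squams X B) = dst X"
  and sqm_sub_squams: "sqm (sub_squams X B) = sqm X"
  by (simp_all add: sub_squams_def carr_def dst_def sqm_def)

lemma glue_gen_sub_squams: "glue_gen (sub_squams X B) = glue_gen X"
  unfolding glue_gen_def[abs_def] sqm_sub_squams ..

context
  fixes X :: "'a squams" and B :: "'a set"
  assumes B: "B \<subseteq> carr X"
begin

lemma glue_rel_sub_squams:
  "a \<in> Mset \<times> B \<Longrightarrow> b \<in> Mset \<times> B \<Longrightarrow> (a, b) \<in> glue_rel (sub_squams X B) \<longleftrightarrow> (a, b) \<in> glue_rel X"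
  using B by (auto simp: glue_rel_def glue_gen_sub_squams carr_sub_squams)

lemma chain_cost_sub_squams: "set zs \<subseteq> Mset \<times> B \<Longrightarrow> chain_cost (sub_squams X B) zs = chain_cost X zs"
proof (induction zs rule: induct_list012)
  case (3 x y zs)
  then show ?case using glue_rel_sub_squams[of x y]
    by (simp add: chain_cost_Cons2 dMX_def dst_sub_squams)
qed (simp_all add: chain_cost_def)

context
  assumes sqm_B: "sqm X ` M0 \<subseteq> B"
begin

lemma tcls_sub_squams:
  assumes m: "m \<in> Mset" and x: "x \<in> B"
  shows "tcls (sub_squams X B) m x = tcls X m x"
proof (intro equalityI subsetI)
  fix z assume "z \<in> tcls (sub_squams X B) m x"
  then show "z \<in> tcls X m x"
    using B by (auto simp: tcls_def glue_rel_def glue_gen_sub_squams carr_sub_squams)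
next
  fix z assume z: "z \<in> tcls X m x"
  have "snd z \<in> B \<longleftrightarrow> snd (m, x) \<in> B"
    by (rule tcls_invariant[where X = X and f = "\<lambda>z. snd z \<in> B", OF _ z])
      (use sqm_B in \<open>auto simp: glue_gen_def\<close>)
  then have "z \<in> Mset \<times> B"
    using z x tensor_carr_mem(2)[OF tcls_in_tensor[OF m] z] B by (auto simp: mem_Times_iff)
  then show "z \<in> tcls (sub_squams X B) m x"
    using z m x glue_rel_sub_squams by (simp add: tcls_def)
qed

lemma tensor_carr_sub_squams:
  assumes "c \<in> carr (tensor (sub_squams X B))"
  obtains m x where "m \<in> Mset" "x \<in> B" "c = tcls X m x"
proof -
  obtain m x where "m \<in> Mset" "x \<in> B" "c = tcls (sub_squams X B) m x"
    using assms by (rule tensor_carrE) (simp add: carr_sub_squams)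
  then show thesis using that tcls_sub_squams by simp
qed

lemma is_alg_sub_squams:
  assumes alg: "is_alg X \<alpha>" and closed: "\<And>m x. m \<in> Mset \<Longrightarrow> x \<in> B \<Longrightarrow> \<alpha> (tcls X m x) \<in> B"
  shows "is_alg (sub_squams X B) \<alpha>"
  unfolding is_alg_def is_mor_def
proof (intro conjI ballI)
  have "Metric_space B (dst X)" using Metric_space.subspace[OF alg_metric[OF alg] B] .
  moreover have "inj_on (sqm X) M0" "\<forall>x\<in>carr X. \<forall>y\<in>carr X. dst X x y \<le> 2"
    "\<forall>i\<in>{0,1}. \<forall>r\<in>{0..1}. \<forall>s\<in>{0..1}.
        dst X (sqm X (i, r)) (sqm X (i, s)) = \<bar>s - r\<bar> \<and> dst X (sqm X (r, i)) (sqm X (s, i)) = \<bar>s - r\<bar>"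
    "\<forall>(r, s)\<in>M0. \<forall>(t, u)\<in>M0. dst X (sqm X (r, s)) (sqm X (t, u)) \<ge> \<bar>r - t\<bar> + \<bar>s - u\<bar>"
    using alg unfolding is_alg_def is_squams_def by blast+
  ultimately show "is_squams (sub_squams X B)"
    using B sqm_B unfolding is_squams_def carr_sub_squams dst_sub_squams sqm_sub_squams by blast
  show "\<alpha> ` carr (tensor (sub_squams X B)) \<subseteq> carr (sub_squams X B)"
    using closed by (auto simp: carr_sub_squams elim: tensor_carr_sub_squams)
next
  fix c c' assume c: "c \<in> carr (tensor (sub_squams X B))" and c': "c' \<in> carr (tensor (sub_squams X B))"
  have in_tensor: "d \<in> carr (tensor X)" if "d \<in> carr (tensor (sub_squams X B))" for d
    using that B by (auto intro: tcls_in_tensor elim: tensor_carr_sub_squams)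
  have "dst X (\<alpha> c) (\<alpha> c') \<le> tdist X c c'"
    using alg_dst_le_tdist[OF alg in_tensor[OF c] in_tensor[OF c']] .
  also have "\<dots> \<le> tdist (sub_squams X B) c c'"
  proof (rule tdist_greatest[OF c c'])
    fix zs assume zs: "zs \<noteq> []" "set zs \<subseteq> Mset \<times> carr (sub_squams X B)" "hd zs \<in> c" "last zs \<in> c'"
    have "tdist X c c' \<le> chain_cost X zs"
      using zs B by (intro tdist_le_chain_cost alg_metric[OF alg]) (auto simp: carr_sub_squams)
    then show "tdist X c c' \<le> chain_cost (sub_squams X B) zs"
      using zs(2) chain_cost_sub_squams by (simp add: carr_sub_squams)
  qed
  finally show "dst (sub_squams X B) (\<alpha> c) (\<alpha> c') \<le> dst (tensor (sub_squams X B)) c c'"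
    by (simp add: dst_sub_squams dst_tensor)
next
  fix p assume p: "p \<in> M0"
  have "tS (sub_squams X B) p = tS X p"
    using tcls_sub_squams[OF M0_cell(1)[OF p]] sqm_B M0_cell(2)[OF p]
      by (auto simp: tS_eq sqm_sub_squams)
  then show "\<alpha> (sqm (tensor (sub_squams X B)) p) = sqm (sub_squams X B) p"
    using alg_tS[OF alg p] by (simp add: sqm_tensor sqm_sub_squams)
qed

lemma alg_mor_into_sub_squams:
  assumes h: "is_alg_mor Y \<beta> (sub_squams X B) \<alpha> h"
  shows "is_alg_mor Y \<beta> X \<alpha> h"
  unfolding is_alg_mor_def is_mor_def
proof (intro conjI ballI)
  have h_in: "h y \<in> B" if "y \<in> carr Y" for y
    using h that unfolding is_alg_mor_def is_mor_def carr_sub_squams by blast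
  then show "h ` carr Y \<subseteq> carr X" using B by blast
  show "dst X (h x) (h y) \<le> dst Y x y" if "x \<in> carr Y" "y \<in> carr Y" for x y
    using h that unfolding is_alg_mor_def is_mor_def dst_sub_squams by blast
  show "h (sqm Y p) = sqm X p" if "p \<in> M0" for p
    using h that unfolding is_alg_mor_def is_mor_def sqm_sub_squams by blast
  fix c assume c: "c \<in> carr (tensor Y)"
  define z where "z = (SOME z. z \<in> c)"
  have z: "fst z \<in> Mset" "snd z \<in> carr Y"
    using tensor_carr_mem(2,3)[OF c some_in_tensor_carr[OF c]] by (simp_all add: z_def)
  have "h (\<beta> c) = \<alpha> (tensor_map Y (sub_squams X B) h c)"
    using h c unfolding is_alg_mor_def by blast
  also have "tensor_map Y (sub_squams X B) h c = tensor_map Y X h c"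
    using tcls_sub_squams[OF z(1) h_in[OF z(2)]] by (simp add: tensor_map_def Let_def z_def)
  finally show "h (\<beta> c) = \<alpha> (tensor_map Y X h c)" .
qed

end

end

section \<open>The unit square as an algebra\<close>

text \<open>Initiality only quantifies over spaces on the type of \<open>G\<close>, so the unit square is transported
  into that type along an injection \<open>e\<close>.\<close>
definition square_space :: "(real \<times> real \<Rightarrow> 'a) \<Rightarrow> 'a squams" where
  "square_space e =
     (e ` unit_square, \<lambda>a b. taxicab (inv_into unit_square e a) (inv_into unit_square e b), e)"

definition square_point :: "(real \<times> real \<Rightarrow> 'a) \<Rightarrow> (nat \<times> nat) \<times> 'a \<Rightarrow> real \<times> real" where
  "square_point e z = carpet_map (fst z) (inv_into unit_square e (snd z))"

definition square_alg :: "(real \<times> real \<Rightarrow> 'a) \<Rightarrow> ((nat \<times> nat) \<times> 'a) set \<Rightarrow> 'a" where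
  "square_alg e c = e (square_point e (SOME z. z \<in> c))"

lemma carr_square_space: "carr (square_space e) = e ` unit_square"
  and dst_square_space:
    "dst (square_space e) = (\<lambda>a b. taxicab (inv_into unit_square e a) (inv_into unit_square e b))"
  and sqm_square_space: "sqm (square_space e) = e"
  by (simp_all add: square_space_def carr_def dst_def sqm_def)

lemma square_injection_exists:
  assumes "is_squams (X :: 'a squams)"
  shows "\<exists>e :: real \<times> real \<Rightarrow> 'a. inj_on e unit_square"
proof -
  have "unit_square \<lesssim> (UNIV :: (real \<times> real) set)" by (simp add: subset_imp_lepoll)
  also have "(UNIV :: (real \<times> real) set) \<approx> (UNIV :: real set)"
    by (metis UNIV_Times_UNIV card_of_Times_same_infinite eqpoll_iff_card_of_ordIso
        infinite_UNIV_char_0)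
  also have "(UNIV :: real set) \<lesssim> {0<..<(1::real)}"
    by (metis eqpoll_real_subset eqpoll_imp_lepoll eqpoll_sym greaterThanLessThan_iff zero_less_one)
  also have "{0<..<(1::real)} \<lesssim> (UNIV :: 'a set)"
  proof -
    have "inj_on (sqm X) M0" using assms by (simp add: is_squams_def)
    moreover have "(\<lambda>r. (r, 0)) ` {0<..<1} \<subseteq> M0" by (auto simp: M0_def)
    ultimately have "inj_on (\<lambda>r. sqm X (r, 0)) {0<..<(1::real)}"
      unfolding inj_on_def by (metis (no_types, lifting) image_subset_iff prod.inject)
    then show ?thesis unfolding lepoll_def by blast
  qed
  finally show ?thesis unfolding lepoll_def by blast
qed

lemma square_point_in_unit_square:
  "fst z \<in> Mset \<Longrightarrow> snd z \<in> e ` unit_square \<Longrightarrow> square_point e z \<in> unit_square"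
  by (auto simp: square_point_def inv_into_into intro: carpet_map_in_unit_square)

context
  fixes e :: "real \<times> real \<Rightarrow> 'a"
  assumes inj: "inj_on e unit_square"
begin

lemma inv_into_square [simp]: "p \<in> unit_square \<Longrightarrow> inv_into unit_square e (e p) = p"
  using inj by (simp add: inv_into_f_f)

lemma is_squams_square_space: "is_squams (square_space e)"
  unfolding is_squams_def carr_square_space dst_square_space sqm_square_space
proof (intro conjI)
  show "Metric_space (e ` unit_square)
      (\<lambda>a b. taxicab (inv_into unit_square e a) (inv_into unit_square e b))"
  proof
    fix x y z
    show "0 \<le> taxicab (inv_into unit_square e x) (inv_into unit_square e y)"
      by (rule taxicab_nonneg)
    show "taxicab (inv_into unit_square e x) (inv_into unit_square e y)
        = taxicab (inv_into unit_square e y) (inv_into unit_square e x)"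
      by (rule taxicab_commute)
    show "taxicab (inv_into unit_square e x) (inv_into unit_square e z)
        \<le> taxicab (inv_into unit_square e x) (inv_into unit_square e y)
          + taxicab (inv_into unit_square e y) (inv_into unit_square e z)"
      by (rule taxicab_triangle)
    assume "x \<in> e ` unit_square" "y \<in> e ` unit_square"
    then show "taxicab (inv_into unit_square e x) (inv_into unit_square e y) = 0 \<longleftrightarrow> x = y"
      by (metis taxicab_eq_0_iff f_inv_into_f)
  qed
  show "\<forall>x\<in>e ` unit_square. \<forall>y\<in>e ` unit_square.
      taxicab (inv_into unit_square e x) (inv_into unit_square e y) \<le> 2"
    by (auto intro: taxicab_le_2)
  show "e ` M0 \<subseteq> e ` unit_square" "inj_on e M0"
    using M0_subset_unit_square inj_on_subset[OF inj] by auto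
  show "\<forall>i\<in>{0, 1}. \<forall>r\<in>{0..1}. \<forall>s\<in>{0..1}.
      taxicab (inv_into unit_square e (e (i, r))) (inv_into unit_square e (e (i, s))) = \<bar>s - r\<bar> \<and>
      taxicab (inv_into unit_square e (e (r, i))) (inv_into unit_square e (e (s, i))) = \<bar>s - r\<bar>"
    by (auto simp: mem_unit_square taxicab_def)
  show "\<forall>(r, s)\<in>M0. \<forall>(t, u)\<in>M0.
      \<bar>r - t\<bar> + \<bar>s - u\<bar>
        \<le> taxicab (inv_into unit_square e (e (r, s))) (inv_into unit_square e (e (t, u)))"
    by (auto simp: taxicab_def inv_into_square[OF subsetD[OF M0_subset_unit_square]])
qed

lemma square_point_glue_invariant: "glue_gen (square_space e) a b \<Longrightarrow> square_point e a = square_point e b"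
  unfolding glue_gen_def sqm_square_space square_point_def carpet_map_def
  by (auto simp: inv_into_square[OF subsetD[OF M0_subset_unit_square]])

lemma square_point_class:
  assumes "c \<in> carr (tensor (square_space e))" "z \<in> c"
  shows "square_point e z = square_point e (SOME z. z \<in> c)"
proof -
  obtain m x where c: "c = tcls (square_space e) m x" using assms(1) by (rule tensor_carrE)
  have inv: "square_point e w = square_point e (m, x)" if "w \<in> c" for w
    by (rule tcls_invariant[where X = "square_space e" and f = "square_point e"])
      (use square_point_glue_invariant that c in auto)
  show ?thesis
    using inv[OF assms(2)] inv[OF some_in_tensor_carr[OF assms(1)]] by simp
qed

lemma taxicab_square_point_le_chain_cost:
  "zs \<noteq> [] \<Longrightarrow> set zs \<subseteq> Mset \<times> e ` unit_square \<Longrightarrow>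
     taxicab (square_point e (hd zs)) (square_point e (last zs)) \<le> chain_cost (square_space e) zs"
proof (induction zs rule: induct_list012)
  case (2 x)
  then show ?case by (simp add: chain_cost_def taxicab_def)
next
  case (3 x y zs)
  have xy: "x \<in> Mset \<times> e ` unit_square" "y \<in> Mset \<times> e ` unit_square" using 3 by auto
  have "taxicab (square_point e x) (square_point e y)
      \<le> (if (x, y) \<in> glue_rel (square_space e) then 0 else dMX (square_space e) x y)"
  proof (cases "(x, y) \<in> glue_rel (square_space e)")
    case True
    then have "equivclp (glue_gen (square_space e)) x y" unfolding glue_rel_def by blast
    then have "square_point e x = square_point e y"
      by (rule equivclp_invariant[where f = "square_point e"]) (rule square_point_glue_invariant)
    then show ?thesis using True by (simp add: taxicab_def)
  next
    case False
    have "taxicab (square_point e x) (square_point e y) \<le> 2"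
      using square_point_in_unit_square[of x e] square_point_in_unit_square[of y e] xy
      by (intro taxicab_le_2) auto
    then show ?thesis
      using False by (simp add: dMX_def dst_square_space square_point_def taxicab_carpet_map)
  qed
  moreover have "taxicab (square_point e y) (square_point e (last (y # zs)))
      \<le> chain_cost (square_space e) (y # zs)"
    using 3 by simp
  ultimately show ?case
    using taxicab_triangle[where p = "square_point e x" and q = "square_point e y"
        and r = "square_point e (last (y # zs))"]
    by (simp add: chain_cost_Cons2)
qed simp

lemma square_alg_tcls:
  assumes "m \<in> Mset" "p \<in> unit_square"
  shows "square_alg e (tcls (square_space e) m (e p)) = e (carpet_map m p)"
proof -
  have "e p \<in> carr (square_space e)" using assms(2) by (simp add: carr_square_space)
  then have "square_point e (m, e p) = square_point e (SOME z. z \<in> tcls (square_space e) m (e p))"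
    using assms(1) by (intro square_point_class tcls_in_tensor tcls_self)
  then show ?thesis using assms(2) by (simp add: square_alg_def square_point_def)
qed

lemma is_alg_square_space: "is_alg (square_space e) (square_alg e)"
  unfolding is_alg_def is_mor_def
proof (intro conjI ballI is_squams_square_space)
  have point_in: "square_point e (SOME z. z \<in> c) \<in> unit_square"
    if "c \<in> carr (tensor (square_space e))" for c
    using tensor_carr_mem(2,3)[OF that some_in_tensor_carr[OF that]]
    by (intro square_point_in_unit_square) (simp_all add: carr_square_space)
  then show "square_alg e ` carr (tensor (square_space e)) \<subseteq> carr (square_space e)"
    by (auto simp: square_alg_def carr_square_space)
  fix c c' assume c: "c \<in> carr (tensor (square_space e))" and c': "c' \<in> carr (tensor (square_space e))"
  have "taxicab (square_point e (SOME z. z \<in> c)) (square_point e (SOME z. z \<in> c'))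
      \<le> tdist (square_space e) c c'"
  proof (rule tdist_greatest[OF c c'])
    fix zs assume zs: "zs \<noteq> []" "set zs \<subseteq> Mset \<times> carr (square_space e)" "hd zs \<in> c" "last zs \<in> c'"
    then have "taxicab (square_point e (hd zs)) (square_point e (last zs))
        \<le> chain_cost (square_space e) zs"
      by (intro taxicab_square_point_le_chain_cost) (simp_all add: carr_square_space)
    then show "taxicab (square_point e (SOME z. z \<in> c)) (square_point e (SOME z. z \<in> c'))
        \<le> chain_cost (square_space e) zs"
      using square_point_class[OF c zs(3)] square_point_class[OF c' zs(4)] by simp
  qed
  then show "dst (square_space e) (square_alg e c) (square_alg e c')
      \<le> dst (tensor (square_space e)) c c'"
    using point_in[OF c] point_in[OF c'] by (simp add: dst_square_space dst_tensor square_alg_def)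
next
  fix p assume p: "p \<in> M0"
  have "square_alg e (tS (square_space e) p) = e (carpet_map (cell_index p) (cell_point p))"
    unfolding tS_eq sqm_square_space
    using M0_cell(1,2)[OF p] M0_subset_unit_square by (intro square_alg_tcls) auto
  also have "\<dots> = e p" using M0_cell(3)[OF p] by simp
  finally show "square_alg e (sqm (tensor (square_space e)) p) = sqm (square_space e) p"
    by (simp add: sqm_tensor sqm_square_space)
qed

end

section \<open>Cauchy completions\<close>

definition compl_rep :: "(nat \<Rightarrow> 'a) set \<Rightarrow> nat \<Rightarrow> 'a" where
  "compl_rep P = (SOME x. x \<in> P)"

context
  fixes X :: "'a squams"
  assumes metric: "Metric_space (carr X) (dst X)"
begin

interpretation Metric_space "carr X" "dst X" by (rule metric)

lemma MCauchy_dst_Cauchy: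
  assumes x: "MCauchy x" and y: "MCauchy y"
  shows "Cauchy (\<lambda>n. dst X (x n) (y n))"
proof (rule metric_CauchyI)
  fix e :: real assume e: "0 < e"
  obtain N1 where N1: "\<And>n n'. N1 \<le> n \<Longrightarrow> N1 \<le> n' \<Longrightarrow> dst X (x n) (x n') < e/2"
    using x e unfolding MCauchy_def by (meson half_gt_zero)
  obtain N2 where N2: "\<And>n n'. N2 \<le> n \<Longrightarrow> N2 \<le> n' \<Longrightarrow> dst X (y n) (y n') < e/2"
    using y e unfolding MCauchy_def by (meson half_gt_zero)
  have "dist (dst X (x m) (y m)) (dst X (x n) (y n)) < e" if "m \<ge> max N1 N2" "n \<ge> max N1 N2" for m n
  proof -
    have "x m \<in> carr X" "x n \<in> carr X" "y m \<in> carr X" "y n \<in> carr X"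
      using x y by (auto simp: MCauchy_def)
    then have "dst X (x m) (y m) \<le> dst X (x m) (x n) + dst X (x n) (y n) + dst X (y n) (y m)"
      "dst X (x n) (y n) \<le> dst X (x n) (x m) + dst X (x m) (y m) + dst X (y m) (y n)"
      by (meson add_mono order_trans order_refl triangle)+
    then show ?thesis
      using N1[of m n] N2[of m n] N1[of n m] N2[of n m] that by (simp add: dist_real_def abs_less_iff)
  qed
  then show "\<exists>M. \<forall>m\<ge>M. \<forall>n\<ge>M. dist (dst X (x m) (y m)) (dst X (x n) (y n)) < e" by blast
qed

lemma equiv_cauchy_eqv: "equiv {x. MCauchy x} (cauchy_eqv X)"
proof (rule equivI)
  show "cauchy_eqv X \<subseteq> {x. MCauchy x} \<times> {x. MCauchy x}" by (auto simp: cauchy_eqv_def)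
  show "refl_on {x. MCauchy x} (cauchy_eqv X)"
    by (rule refl_onI) (auto simp: cauchy_eqv_def MCauchy_def image_subset_iff)
  show "sym (cauchy_eqv X)"
    by (auto simp: sym_def cauchy_eqv_def commute)
  show "trans (cauchy_eqv X)"
  proof (rule transI)
    fix x y z assume "(x, y) \<in> cauchy_eqv X" "(y, z) \<in> cauchy_eqv X"
    then have c: "MCauchy x" "MCauchy y" "MCauchy z"
      and xy: "(\<lambda>n. dst X (x n) (y n)) \<longlonglongrightarrow> 0" and yz: "(\<lambda>n. dst X (y n) (z n)) \<longlonglongrightarrow> 0"
      by (auto simp: cauchy_eqv_def)
    have "(\<lambda>n. dst X (x n) (z n)) \<longlonglongrightarrow> 0"
    proof (rule tendsto_sandwich[OF _ _ tendsto_const])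
      show "(\<lambda>n. dst X (x n) (y n) + dst X (y n) (z n)) \<longlonglongrightarrow> 0"
        using tendsto_add[OF xy yz] by simp
      show "\<forall>\<^sub>F n in sequentially. dst X (x n) (z n) \<le> dst X (x n) (y n) + dst X (y n) (z n)"
        using c by (intro always_eventually allI triangle) (auto simp: MCauchy_def)
    qed simp
    then show "(x, z) \<in> cauchy_eqv X" using c by (simp add: cauchy_eqv_def)
  qed
qed

lemma compl_rep_class:
  assumes "P \<in> compl_carr X"
  shows "compl_rep P \<in> P" "MCauchy (compl_rep P)" "P = cauchy_eqv X `` {compl_rep P}"
proof -
  obtain x where x: "P = cauchy_eqv X `` {x}" "MCauchy x"
    using assms unfolding compl_carr_def by (auto elim: quotientE)
  then have "x \<in> P" using equiv_class_self[OF equiv_cauchy_eqv] by simp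
  then show r: "compl_rep P \<in> P" unfolding compl_rep_def by (metis someI)
  then have xr: "(x, compl_rep P) \<in> cauchy_eqv X" using x by simp
  then show "MCauchy (compl_rep P)" by (simp add: cauchy_eqv_def)
  show "P = cauchy_eqv X `` {compl_rep P}"
    using x(1) xr equiv_class_eq_iff[OF equiv_cauchy_eqv] by metis
qed

lemma compl_rep_in: "P \<in> compl_carr X \<Longrightarrow> compl_rep P n \<in> carr X"
  using compl_rep_class(2) by (auto simp: MCauchy_def)

lemma compl_dist_tendsto:
  assumes "P \<in> compl_carr X" "Q \<in> compl_carr X"
  shows "(\<lambda>n. dst X (compl_rep P n) (compl_rep Q n)) \<longlonglongrightarrow> compl_dist X P Q"
proof -
  have "Cauchy (\<lambda>n. dst X (compl_rep P n) (compl_rep Q n))"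
    using assms by (intro MCauchy_dst_Cauchy compl_rep_class)
  then show ?thesis
    unfolding compl_dist_def compl_rep_def[symmetric]
      by (simp add: Cauchy_convergent_iff convergent_LIMSEQ_iff)
qed

lemma compl_dist_eq_0_iff:
  assumes "P \<in> compl_carr X" "Q \<in> compl_carr X"
  shows "compl_dist X P Q = 0 \<longleftrightarrow> P = Q"
proof
  assume "compl_dist X P Q = 0"
  then have "(compl_rep P, compl_rep Q) \<in> cauchy_eqv X"
    using compl_dist_tendsto[OF assms] compl_rep_class(2)[OF assms(1)] compl_rep_class(2)[OF assms(2)]
    by (simp add: cauchy_eqv_def)
  then have "cauchy_eqv X `` {compl_rep P} = cauchy_eqv X `` {compl_rep Q}"
    by (rule equiv_class_eq[OF equiv_cauchy_eqv])
  then show "P = Q"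
    using compl_rep_class(3)[OF assms(1)] compl_rep_class(3)[OF assms(2)] by simp
next
  assume "P = Q"
  with compl_rep_in[OF assms(1)] have "(\<lambda>n. dst X (compl_rep P n) (compl_rep Q n)) = (\<lambda>n. 0)"
    by simp
  then have "(\<lambda>n. 0) \<longlonglongrightarrow> compl_dist X P Q"
    using compl_dist_tendsto[OF assms] by simp
  then show "compl_dist X P Q = 0"
    using LIMSEQ_unique tendsto_const by blast
qed

end

definition compl_ext :: "('a \<Rightarrow> 'b::metric_space) \<Rightarrow> (nat \<Rightarrow> 'a) set \<Rightarrow> 'b" where
  "compl_ext f P = lim (\<lambda>n. f (compl_rep P n))"

context
  fixes X :: "'a squams" and f :: "'a \<Rightarrow> 'b::complete_space"
  assumes metric: "Metric_space (carr X) (dst X)"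
    and lower: "\<And>x y. x \<in> carr X \<Longrightarrow> y \<in> carr X \<Longrightarrow> dist (f x) (f y) \<le> dst X x y"
begin

interpretation Metric_space "carr X" "dst X" by (rule metric)

lemma compl_ext_tendsto:
  assumes P: "P \<in> compl_carr X"
  shows "(\<lambda>n. f (compl_rep P n)) \<longlonglongrightarrow> compl_ext f P"
proof -
  have "Cauchy (\<lambda>n. f (compl_rep P n))"
  proof (rule metric_CauchyI)
    fix e :: real assume "0 < e"
    then obtain N where "\<And>n n'. N \<le> n \<Longrightarrow> N \<le> n' \<Longrightarrow> dst X (compl_rep P n) (compl_rep P n') < e"
      using compl_rep_class(2)[OF metric P] unfolding MCauchy_def by blast
    then show "\<exists>M. \<forall>m\<ge>M. \<forall>n\<ge>M. dist (f (compl_rep P m)) (f (compl_rep P n)) < e"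
      using lower[OF compl_rep_in[OF metric P] compl_rep_in[OF metric P]] by (meson order_le_less_trans)
  qed
  then show ?thesis
    unfolding compl_ext_def by (simp add: Cauchy_convergent_iff convergent_LIMSEQ_iff)
qed

lemma compl_ext_in_closure: "P \<in> compl_carr X \<Longrightarrow> compl_ext f P \<in> closure (f ` carr X)"
  unfolding closure_sequential
  by (intro exI[of _ "\<lambda>n. f (compl_rep P n)"] conjI compl_ext_tendsto)
    (auto intro: compl_rep_in[OF metric])

context
  fixes C :: real
  assumes upper: "\<And>x y. x \<in> carr X \<Longrightarrow> y \<in> carr X \<Longrightarrow> dst X x y \<le> C * dist (f x) (f y)"
begin

lemma compl_dist_bounds:
  assumes P: "P \<in> compl_carr X" and Q: "Q \<in> compl_carr X"
  shows "dist (compl_ext f P) (compl_ext f Q) \<le> compl_dist X P Q"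
    and "compl_dist X P Q \<le> C * dist (compl_ext f P) (compl_ext f Q)"
proof -
  have dist_tendsto: "(\<lambda>n. dist (f (compl_rep P n)) (f (compl_rep Q n)))
      \<longlonglongrightarrow> dist (compl_ext f P) (compl_ext f Q)"
    by (intro tendsto_dist compl_ext_tendsto P Q)
  show "dist (compl_ext f P) (compl_ext f Q) \<le> compl_dist X P Q"
    by (rule LIMSEQ_le[OF dist_tendsto compl_dist_tendsto[OF metric P Q]])
      (use lower compl_rep_in[OF metric] P Q in blast)
  show "compl_dist X P Q \<le> C * dist (compl_ext f P) (compl_ext f Q)"
    by (rule LIMSEQ_le[OF compl_dist_tendsto[OF metric P Q] tendsto_mult_left[OF dist_tendsto]])
      (use upper compl_rep_in[OF metric] P Q in blast)
qed

lemma inj_on_compl_ext: "inj_on (compl_ext f) (compl_carr X)"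
proof (rule inj_onI)
  fix P Q assume P: "P \<in> compl_carr X" and Q: "Q \<in> compl_carr X"
    and eq: "compl_ext f P = compl_ext f Q"
  have "0 \<le> compl_dist X P Q"
    by (rule LIMSEQ_le_const[OF compl_dist_tendsto[OF metric P Q]]) simp
  moreover have "compl_dist X P Q \<le> 0"
    using compl_dist_bounds(2)[OF P Q] eq by simp
  ultimately show "P = Q"
    using compl_dist_eq_0_iff[OF metric P Q] by simp
qed

lemma MCauchy_if_Cauchy_image:
  assumes x: "\<And>n. x n \<in> carr X" and Cauchy: "Cauchy (\<lambda>n. f (x n))"
  shows "MCauchy x"
  unfolding MCauchy_def
proof (intro conjI allI impI)
  show "range x \<subseteq> carr X" using x by auto
  fix e :: real assume "e > 0"
  then have "e / (\<bar>C\<bar> + 1) > 0" by simp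
  then obtain M where M: "\<forall>m\<ge>M. \<forall>n\<ge>M. dist (f (x m)) (f (x n)) < e / (\<bar>C\<bar> + 1)"
    using metric_CauchyD[OF Cauchy] by blast
  have "dst X (x m) (x n) < e" if "M \<le> m" "M \<le> n" for m n
  proof -
    have "dst X (x m) (x n) \<le> C * dist (f (x m)) (f (x n))" using upper[OF x x] .
    also have "\<dots> \<le> (\<bar>C\<bar> + 1) * dist (f (x m)) (f (x n))" by (intro mult_right_mono) auto
    also have "\<dots> < e"
      using M[rule_format, OF that] by (simp add: pos_less_divide_eq mult.commute)
    finally show ?thesis .
  qed
  then show "\<exists>N. \<forall>n n'. N \<le> n \<longrightarrow> N \<le> n' \<longrightarrow> dst X (x n) (x n') < e" by blast
qed

lemma closure_subset_compl_ext_image: "closure (f ` carr X) \<subseteq> compl_ext f ` compl_carr X"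
proof
  fix y assume "y \<in> closure (f ` carr X)"
  then obtain s where s: "\<forall>n. s n \<in> f ` carr X" and sy: "s \<longlonglongrightarrow> y"
    unfolding closure_sequential by blast
  then have "\<forall>n. \<exists>z. z \<in> carr X \<and> s n = f z" by blast
  from choice[OF this] obtain x where "\<forall>n. x n \<in> carr X \<and> s n = f (x n)"
    by blast
  then have x: "\<And>n. x n \<in> carr X" and sx: "s = (\<lambda>n. f (x n))" by auto
  define P where "P = cauchy_eqv X `` {x}"
  have "MCauchy x" using x LIMSEQ_imp_Cauchy[OF sy] unfolding sx by (rule MCauchy_if_Cauchy_image)
  then have P: "P \<in> compl_carr X"
    unfolding P_def compl_carr_def by (intro quotientI) simp
  have "(x, compl_rep P) \<in> cauchy_eqv X" using compl_rep_class(1)[OF metric P] by (simp add: P_def)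
  then have to_0: "(\<lambda>n. dst X (x n) (compl_rep P n)) \<longlonglongrightarrow> 0" by (simp add: cauchy_eqv_def)
  have "(\<lambda>n. dist (f (compl_rep P n)) y) \<longlonglongrightarrow> 0"
  proof (rule tendsto_sandwich[OF _ _ tendsto_const])
    show "(\<lambda>n. dst X (x n) (compl_rep P n) + dist (s n) y) \<longlonglongrightarrow> 0"
      using tendsto_add[OF to_0 sy[THEN tendsto_dist_iff[THEN iffD1]]] by simp
    have "dist (f (compl_rep P n)) y \<le> dst X (x n) (compl_rep P n) + dist (s n) y" for n
      using lower[OF x[of n] compl_rep_in[OF metric P, of n]]
        dist_triangle3[of "f (compl_rep P n)" y "s n"]
      by (simp add: sx dist_commute)
    then show "\<forall>\<^sub>F n in sequentially.
        dist (f (compl_rep P n)) y \<le> dst X (x n) (compl_rep P n) + dist (s n) y"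
      by simp
  qed simp
  then have "(\<lambda>n. f (compl_rep P n)) \<longlonglongrightarrow> y"
    by (rule tendsto_dist_iff[THEN iffD2])
  then have "compl_ext f P = y"
    by (rule LIMSEQ_unique[OF compl_ext_tendsto[OF P]])
  then show "y \<in> compl_ext f ` compl_carr X" using P by blast
qed

lemma bij_betw_compl_ext: "bij_betw (compl_ext f) (compl_carr X) (closure (f ` carr X))"
  unfolding bij_betw_def
  using inj_on_compl_ext compl_ext_in_closure closure_subset_compl_ext_image by blast

lemma bilipschitz_equiv_completion:
  assumes "1 \<le> C"
  shows "bilipschitz_equiv (compl_carr X) (compl_dist X) (closure (f ` carr X)) dist"
  unfolding bilipschitz_equiv_def
proof (intro exI[of _ "compl_ext f"] exI[of _ C] conjI ballI)
  fix P Q assume P: "P \<in> compl_carr X" and Q: "Q \<in> compl_carr X"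
  note bounds = compl_dist_bounds[OF P Q]
  have "0 < C" using assms by simp
  then show "compl_dist X P Q / C \<le> dist (compl_ext f P) (compl_ext f Q)"
    using bounds(2) by (simp add: pos_divide_le_eq mult.commute)
  have "0 \<le> compl_dist X P Q"
    using bounds(1) zero_le_dist[of "compl_ext f P" "compl_ext f Q"] by linarith
  then have "1 * compl_dist X P Q \<le> C * compl_dist X P Q"
    using assms by (intro mult_right_mono)
  then show "dist (compl_ext f P) (compl_ext f Q) \<le> C * compl_dist X P Q"
    using bounds(1) by linarith
qed (use assms bij_betw_compl_ext in simp_all)

end

end

lemma bilipschitz_equiv_taxicab:
  assumes "bilipschitz_equiv A d S dist"
  shows "bilipschitz_equiv A d S taxicab"
proof -
  obtain f K where f: "bij_betw f A S" "K \<ge> 1"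
    and bounds: "\<And>x y. x \<in> A \<Longrightarrow> y \<in> A \<Longrightarrow> d x y / K \<le> dist (f x) (f y) \<and> dist (f x) (f y) \<le> K * d x y"
    using assms unfolding bilipschitz_equiv_def by blast
  have "d x y / (2 * K) \<le> taxicab (f x) (f y) \<and> taxicab (f x) (f y) \<le> 2 * K * d x y"
    if "x \<in> A" "y \<in> A" for x y
  proof
    have K: "0 < K" using f(2) by simp
    have "d x y / (2 * K) \<le> dist (f x) (f y)"
    proof (cases "0 \<le> d x y")
      case True
      then have "d x y / (2 * K) \<le> d x y / K" using K by (intro divide_left_mono) auto
      then show ?thesis using bounds[OF that] by linarith
    next
      case False
      then have "d x y / (2 * K) \<le> 0" using K by (simp add: divide_nonpos_pos)
      then show ?thesis using zero_le_dist[of "f x" "f y"] by linarith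
    qed
    then show "d x y / (2 * K) \<le> taxicab (f x) (f y)"
      using dist_le_taxicab[of "f x" "f y"] by linarith
    show "taxicab (f x) (f y) \<le> 2 * K * d x y"
      using bounds[OF that] taxicab_le_2_dist[of "f x" "f y"] by (simp add: mult.assoc)
  qed
  then show ?thesis
    unfolding bilipschitz_equiv_def using f by (intro exI[of _ f] exI[of _ "2 * K"] conjI) simp_all
qed

section \<open>The Sierpinski carpet\<close>

definition hutchinson :: "(real \<times> real) set \<Rightarrow> (real \<times> real) set" where
  "hutchinson K = (\<Union>m\<in>Mset. carpet_map m ` K)"

definition carpet_fixpoint :: "(real \<times> real) set \<Rightarrow> bool" where
  "carpet_fixpoint K \<longleftrightarrow> K \<noteq> {} \<and> compact K \<and> K \<subseteq> unit_square \<and> K = hutchinson K"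

lemma carpet_eq_The: "carpet = (THE K. carpet_fixpoint K)"
proof -
  have "(\<lambda>(x, y). ((real (fst m) + x) / 3, (real (snd m) + y) / 3)) = carpet_map m" for m
    by (auto simp: carpet_map_def)
  then show ?thesis
    unfolding carpet_def carpet_fixpoint_def hutchinson_def unit_square_def by (simp only:)
qed

lemma carpet_fixpoint_approx:
  assumes K1: "carpet_fixpoint K1" and K2: "carpet_fixpoint K2"
  shows "\<forall>k\<in>K1. \<exists>k'\<in>K2. taxicab k k' \<le> 2 / 3 ^ n"
proof (induction n)
  case 0
  obtain k' where "k' \<in> K2" using K2 unfolding carpet_fixpoint_def by blast
  moreover have "K1 \<subseteq> unit_square" "K2 \<subseteq> unit_square" using K1 K2 unfolding carpet_fixpoint_def
    by blast+
  ultimately show ?case by (auto intro!: bexI[of _ k'] taxicab_le_2)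
next
  case (Suc n)
  show ?case
  proof
    fix k assume "k \<in> K1"
    then have "k \<in> hutchinson K1" using K1 unfolding carpet_fixpoint_def by blast
    then obtain m k1 where m: "m \<in> Mset" and k1: "k1 \<in> K1" and k: "k = carpet_map m k1"
      unfolding hutchinson_def by blast
    obtain k2 where k2: "k2 \<in> K2" and t: "taxicab k1 k2 \<le> 2 / 3 ^ n" using Suc.IH k1 by blast
    have "carpet_map m k2 \<in> hutchinson K2" using m k2 unfolding hutchinson_def by blast
    then have "carpet_map m k2 \<in> K2" using K2 unfolding carpet_fixpoint_def by blast
    moreover have "taxicab k (carpet_map m k2) \<le> 2 / 3 ^ Suc n"
      using t by (simp add: k taxicab_carpet_map)
    ultimately show "\<exists>k'\<in>K2. taxicab k k' \<le> 2 / 3 ^ Suc n" by blast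
  qed
qed

lemma carpet_fixpoint_subset:
  assumes K1: "carpet_fixpoint K1" and K2: "carpet_fixpoint K2"
  shows "K1 \<subseteq> K2"
proof
  fix k assume k: "k \<in> K1"
  have "k \<in> closure K2"
    unfolding closure_approachable
  proof (intro allI impI)
    fix e :: real assume e: "e > 0"
    obtain n where "2 / e < 3 ^ n" using real_arch_pow[of 3 "2 / e"] by auto
    then have n: "2 / 3 ^ n < e" using e by (simp add: field_simps)
    obtain k' where "k' \<in> K2" "taxicab k k' \<le> 2 / 3 ^ n"
      using carpet_fixpoint_approx[OF K1 K2] k by blast
    then show "\<exists>y\<in>K2. dist y k < e"
      using dist_le_taxicab[of k k'] n by (intro bexI[of _ k']) (auto simp: dist_commute)
  qed
  moreover have "closed K2" using K2 compact_imp_closed unfolding carpet_fixpoint_def by blast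
  ultimately show "k \<in> K2" by (simp add: closure_closed)
qed

lemma carpet_eqI:
  assumes "carpet_fixpoint K"
  shows "carpet = K"
  unfolding carpet_eq_The
proof (rule the_equality)
  fix K' assume "carpet_fixpoint K'"
  then show "K' = K" using assms by (intro subset_antisym carpet_fixpoint_subset)
qed (rule assms)

lemma hutchinson_closure:
  assumes "bounded S"
  shows "hutchinson (closure S) = closure (hutchinson S)"
proof
  have "compact (carpet_map m ` closure S)" for m
    using assms by (intro compact_continuous_image continuous_on_carpet_map) simp
  then have "compact (hutchinson (closure S))"
    unfolding hutchinson_def by (intro compact_UN finite_Mset)
  moreover have "hutchinson S \<subseteq> hutchinson (closure S)"
    unfolding hutchinson_def using closure_subset by (intro UN_mono image_mono) auto
  ultimately show "closure (hutchinson S) \<subseteq> hutchinson (closure S)"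
    by (intro closure_minimal compact_imp_closed)
  have "carpet_map m ` closure S \<subseteq> closure (hutchinson S)" if "m \<in> Mset" for m
  proof (rule image_closure_subset[OF continuous_on_carpet_map closed_closure])
    have "carpet_map m ` S \<subseteq> hutchinson S" using that unfolding hutchinson_def by blast
    then show "carpet_map m ` S \<subseteq> closure (hutchinson S)" using closure_subset by blast
  qed
  then show "hutchinson (closure S) \<subseteq> closure (hutchinson S)"
    unfolding hutchinson_def[of "closure S"] by blast
qed

section \<open>The initial algebra\<close>

locale initial_alg =
  fixes G :: "'a squams" and \<eta> :: "((nat \<times> nat) \<times> 'a) set \<Rightarrow> 'a"
  assumes initial: "is_initial_alg G \<eta>"
begin

lemma is_alg_G: "is_alg G \<eta>"
  using initial by (simp add: is_initial_alg_def)

lemmas is_squams_G = alg_squams[OF is_alg_G]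

lemma alg_mor_exists: "is_alg (X :: 'a squams) \<alpha> \<Longrightarrow> \<exists>h. is_alg_mor G \<eta> X \<alpha> h"
  using initial unfolding is_initial_alg_def by blast

lemma alg_mor_unique:
  assumes "is_alg (X :: 'a squams) \<alpha>" "is_alg_mor G \<eta> X \<alpha> h" "is_alg_mor G \<eta> X \<alpha> h'" "x \<in> carr G"
  shows "h x = h' x"
proof -
  obtain h0 where "\<forall>h'. is_alg_mor G \<eta> X \<alpha> h' \<longrightarrow> (\<forall>x\<in>carr G. h' x = h0 x)"
    using initial assms(1) unfolding is_initial_alg_def by blast
  then show ?thesis using assms(2-4) by metis
qed

text \<open>Initiality makes \<open>G\<close> its own smallest subalgebra: the unique endomorphism factors through any
  subalgebra, and it is the identity.\<close>
lemma carr_induct [consumes 1, case_names boundary eta]: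
  assumes x: "x \<in> carr G"
    and boundary: "\<And>p. p \<in> M0 \<Longrightarrow> P (sqm G p)"
    and eta: "\<And>m x. m \<in> Mset \<Longrightarrow> x \<in> carr G \<Longrightarrow> P x \<Longrightarrow> P (\<eta> (tcls G m x))"
  shows "P x"
proof -
  define B where "B = {x \<in> carr G. P x}"
  have B: "B \<subseteq> carr G" "sqm G ` M0 \<subseteq> B"
    using boundary squams_sqm_in[OF is_squams_G] by (auto simp: B_def)
  have "is_alg (sub_squams G B) \<eta>"
    using B is_alg_G by (rule is_alg_sub_squams) (auto simp: B_def intro: eta alg_tcls_in[OF is_alg_G])
  then obtain h where h: "is_alg_mor G \<eta> (sub_squams G B) \<eta> h"
    using alg_mor_exists by blast
  then have "h x \<in> B" using x by (auto simp: is_alg_mor_def is_mor_def carr_sub_squams)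
  moreover have "h x = x"
    using alg_mor_unique[OF is_alg_G alg_mor_into_sub_squams[OF B h] is_alg_mor_id[OF is_alg_G] x] .
  ultimately show ?thesis by (simp add: B_def)
qed

lemma eta_surj:
  assumes "x \<in> carr G"
  obtains m x' where "m \<in> Mset" "x' \<in> carr G" "x = \<eta> (tcls G m x')"
proof -
  have "\<exists>m\<in>Mset. \<exists>x'\<in>carr G. x = \<eta> (tcls G m x')"
    using assms
  proof (induction rule: carr_induct)
    case (boundary p)
    then show ?case
      using alg_sqm_eq_tcls[OF is_alg_G boundary] M0_cell[OF boundary] squams_sqm_in[OF is_squams_G]
        by blast
  qed blast
  then show thesis using that by blast
qed

definition square_emb :: "real \<times> real \<Rightarrow> 'a" where
  "square_emb = (SOME e. inj_on e unit_square)"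

definition square_mor :: "'a \<Rightarrow> 'a" where
  "square_mor = (SOME h. is_alg_mor G \<eta> (square_space square_emb) (square_alg square_emb) h)"

definition coord :: "'a \<Rightarrow> real \<times> real" where
  "coord x = inv_into unit_square square_emb (square_mor x)"

lemma inj_square_emb: "inj_on square_emb unit_square"
  using square_injection_exists[OF is_squams_G] unfolding square_emb_def by (rule someI_ex)

lemma is_alg_mor_square_mor:
  "is_alg_mor G \<eta> (square_space square_emb) (square_alg square_emb) square_mor"
  using alg_mor_exists[OF is_alg_square_space[OF inj_square_emb]] unfolding square_mor_def
    by (rule someI_ex)

lemma coord_in_unit_square: "x \<in> carr G \<Longrightarrow> coord x \<in> unit_square"
  and square_mor_eq: "x \<in> carr G \<Longrightarrow> square_mor x = square_emb (coord x)"
proof -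
  assume "x \<in> carr G"
  then have "square_mor x \<in> square_emb ` unit_square"
    using is_alg_mor_square_mor unfolding is_alg_mor_def is_mor_def carr_square_space by blast
  then show "coord x \<in> unit_square" "square_mor x = square_emb (coord x)"
    unfolding coord_def by (simp_all add: inv_into_into f_inv_into_f)
qed

lemma taxicab_coord_le: "x \<in> carr G \<Longrightarrow> y \<in> carr G \<Longrightarrow> taxicab (coord x) (coord y) \<le> dst G x y"
  using is_alg_mor_square_mor unfolding is_alg_mor_def is_mor_def dst_square_space coord_def by blast

lemma coord_sqm: "p \<in> M0 \<Longrightarrow> coord (sqm G p) = p"
  using is_alg_mor_square_mor inv_into_square[OF inj_square_emb subsetD[OF M0_subset_unit_square]]
  unfolding is_alg_mor_def is_mor_def sqm_square_space coord_def by auto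

lemma coord_glue_invariant:
  "glue_gen G a b \<Longrightarrow> carpet_map (fst a) (coord (snd a)) = carpet_map (fst b) (coord (snd b))"
  unfolding glue_gen_def by (auto simp: coord_sqm carpet_map_def)

lemma coord_eta:
  assumes m: "m \<in> Mset" and x: "x \<in> carr G"
  shows "coord (\<eta> (tcls G m x)) = carpet_map m (coord x)"
proof -
  let ?e = square_emb and ?c = "tcls G m x"
  define z where "z = (SOME z. z \<in> ?c)"
  have c: "?c \<in> carr (tensor G)" using m x by (rule tcls_in_tensor)
  have z: "z \<in> ?c" unfolding z_def using c by (rule some_in_tensor_carr)
  have zm: "fst z \<in> Mset" "snd z \<in> carr G" using tensor_carr_mem(2,3)[OF c z] .
  have "square_mor (\<eta> ?c) = square_alg ?e (tensor_map G (square_space ?e) square_mor ?c)"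
    using is_alg_mor_square_mor c unfolding is_alg_mor_def by blast
  also have "\<dots> = square_alg ?e (tcls (square_space ?e) (fst z) (?e (coord (snd z))))"
    by (simp add: tensor_map_def Let_def z_def[symmetric] square_mor_eq[OF zm(2)])
  also have "\<dots> = ?e (carpet_map (fst z) (coord (snd z)))"
    using square_alg_tcls[OF inj_square_emb zm(1) coord_in_unit_square[OF zm(2)]] .
  also have "carpet_map (fst z) (coord (snd z)) = carpet_map m (coord x)"
    using tcls_invariant[where f = "\<lambda>z. carpet_map (fst z) (coord (snd z))", OF coord_glue_invariant z]
    by simp
  finally have "square_mor (\<eta> ?c) = ?e (carpet_map m (coord x))" .
  then show ?thesis
    using inv_into_square[OF inj_square_emb carpet_map_in_unit_square[OF m coord_in_unit_square[OF x]]]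
    by (simp add: coord_def[of "\<eta> ?c"])
qed

primrec level :: "nat \<Rightarrow> 'a set" where
  "level 0 = sqm G ` M0"
| "level (Suc k) = {\<eta> (tcls G m x) | m x. m \<in> Mset \<and> x \<in> level k}"

lemma mem_level_Suc: "y \<in> level (Suc k) \<longleftrightarrow> (\<exists>m\<in>Mset. \<exists>x\<in>level k. y = \<eta> (tcls G m x))"
  by auto

lemma level_subset_carr: "level k \<subseteq> carr G"
  by (induction k) (auto intro: squams_sqm_in[OF is_squams_G] alg_tcls_in[OF is_alg_G])

lemma level_Suc_mono: "level k \<subseteq> level (Suc k)"
proof (induction k)
  case 0
  show ?case
  proof
    fix x assume "x \<in> level 0"
    then obtain p where p: "p \<in> M0" "x = sqm G p" by auto
    then show "x \<in> level (Suc 0)"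
      unfolding mem_level_Suc using alg_sqm_eq_tcls[OF is_alg_G p(1)] M0_cell[OF p(1)] by auto
  qed
next
  case (Suc k)
  show ?case
  proof
    fix y assume "y \<in> level (Suc k)"
    then obtain m x where "m \<in> Mset" "x \<in> level k" "y = \<eta> (tcls G m x)"
      unfolding mem_level_Suc by blast
    then show "y \<in> level (Suc (Suc k))"
      using Suc.IH unfolding mem_level_Suc[of _ "Suc k"] by blast
  qed
qed

lemma boundary_subset_level: "sqm G ` M0 \<subseteq> level k"
  using lift_Suc_mono_le[of level, OF level_Suc_mono, of 0 k] by simp

lemma carr_eq_UN_level: "carr G = (\<Union>k. level k)"
proof
  show "carr G \<subseteq> (\<Union>k. level k)"
  proof
    fix x assume "x \<in> carr G"
    then show "x \<in> (\<Union>k. level k)"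
    proof (induction rule: carr_induct)
      case (boundary p)
      then show ?case using level.simps(1) by blast
    next
      case (eta m x)
      then obtain k where "x \<in> level k" by blast
      then have "\<eta> (tcls G m x) \<in> level (Suc k)" using eta.hyps(1) unfolding mem_level_Suc by blast
      then show ?case by blast
    qed
  qed
  show "(\<Union>k. level k) \<subseteq> carr G" using level_subset_carr by blast
qed

context
  fixes A :: "'a set"
  assumes A: "A \<subseteq> carr G" "sqm G ` M0 \<subseteq> A"
    and IH: "\<And>x y. x \<in> A \<Longrightarrow> y \<in> A \<Longrightarrow> dst G x y \<le> 6 * taxicab (coord x) (coord y)"
begin

text \<open>Points in neighbouring cells are joined through a common boundary point of the two cells.\<close>
lemma dst_eta_neighbours_le:
  assumes m: "m \<in> Mset" and n: "n \<in> Mset" and x: "x \<in> A" and y: "y \<in> A"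
    and near: "m \<noteq> n" "\<bar>real (fst m) - real (fst n)\<bar> \<le> 1" "\<bar>real (snd m) - real (snd n)\<bar> \<le> 1"
  shows "dst G (\<eta> (tcls G m x)) (\<eta> (tcls G n y))
      \<le> 6 * taxicab (carpet_map m (coord x)) (carpet_map n (coord y))"
proof -
  have xG: "x \<in> carr G" and yG: "y \<in> carr G" using A x y by auto
  obtain p q where p: "p \<in> M0" and q: "q \<in> M0" and pq: "carpet_map m p = carpet_map n q"
    and geodesic: "taxicab (carpet_map m (coord x)) (carpet_map m p)
        + taxicab (carpet_map n q) (carpet_map n (coord y))
      = taxicab (carpet_map m (coord x)) (carpet_map n (coord y))"
    using carpet_map_junction[OF near coord_in_unit_square[OF xG] coord_in_unit_square[OF yG]] by blast
  have Sp: "sqm G p \<in> A" and Sq: "sqm G q \<in> A" using A p q by auto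
  define z where "z = \<eta> (tcls G m (sqm G p))"
  have "sqm G ` M0 \<subseteq> carr G" using A by blast
  then have "tcls G m (sqm G p) = tcls G n (sqm G q)" by (rule tcls_sqm_eq[OF _ m n p q pq])
  then have z': "z = \<eta> (tcls G n (sqm G q))" unfolding z_def by simp
  have "dst G (\<eta> (tcls G m x)) z \<le> dst G x (sqm G p) / 3"
    unfolding z_def using alg_dst_same_cell[OF is_alg_G m xG] A Sp by auto
  also have "\<dots> \<le> 6 * taxicab (carpet_map m (coord x)) (carpet_map m p)"
    using IH[OF x Sp] by (simp add: coord_sqm[OF p] taxicab_carpet_map)
  finally have xz: "dst G (\<eta> (tcls G m x)) z \<le> 6 * taxicab (carpet_map m (coord x)) (carpet_map m p)" .
  have "dst G z (\<eta> (tcls G n y)) \<le> dst G (sqm G q) y / 3"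
    unfolding z' using alg_dst_same_cell[OF is_alg_G n _ yG] A Sq by auto
  also have "\<dots> \<le> 6 * taxicab (carpet_map n q) (carpet_map n (coord y))"
    using IH[OF Sq y] by (simp add: coord_sqm[OF q] taxicab_carpet_map)
  finally have zy: "dst G z (\<eta> (tcls G n y)) \<le> 6 * taxicab (carpet_map n q) (carpet_map n (coord y))" .
  have "z \<in> carr G" unfolding z_def using A Sp m by (auto intro: alg_tcls_in[OF is_alg_G])
  then have "dst G (\<eta> (tcls G m x)) (\<eta> (tcls G n y))
      \<le> dst G (\<eta> (tcls G m x)) z + dst G z (\<eta> (tcls G n y))"
    using Metric_space.triangle[OF squams_metric[OF is_squams_G]] alg_tcls_in[OF is_alg_G] m n xG yG
      by blast
  then show ?thesis using xz zy geodesic by linarith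
qed

text \<open>Points in distant cells are at taxicab distance at least \<open>1/3\<close>; this forces the constant \<open>6\<close>.\<close>
lemma dst_eta_le:
  assumes m: "m \<in> Mset" and n: "n \<in> Mset" and x: "x \<in> A" and y: "y \<in> A"
  shows "dst G (\<eta> (tcls G m x)) (\<eta> (tcls G n y))
      \<le> 6 * taxicab (coord (\<eta> (tcls G m x))) (coord (\<eta> (tcls G n y)))"
proof -
  have xG: "x \<in> carr G" and yG: "y \<in> carr G" using A x y by auto
  note coords = coord_eta[OF m xG] coord_eta[OF n yG]
  consider "m = n"
    | "m \<noteq> n" "\<bar>real (fst m) - real (fst n)\<bar> \<le> 1" "\<bar>real (snd m) - real (snd n)\<bar> \<le> 1"
    | "2 \<le> \<bar>real (fst m) - real (fst n)\<bar> \<or> 2 \<le> \<bar>real (snd m) - real (snd n)\<bar>"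
    using real_nat_dist_cases[of "fst m" "fst n"] real_nat_dist_cases[of "snd m" "snd n"] by blast
  then show ?thesis
  proof cases
    case 1
    have "dst G (\<eta> (tcls G m x)) (\<eta> (tcls G m y)) \<le> dst G x y / 3"
      using alg_dst_same_cell[OF is_alg_G m xG yG] .
    also have "\<dots> \<le> 6 * (taxicab (coord x) (coord y) / 3)" using IH[OF x y] by simp
    finally show ?thesis using 1 coords by (simp add: taxicab_carpet_map)
  next
    case 2
    then show ?thesis unfolding coords by (rule dst_eta_neighbours_le[OF m n x y])
  next
    case 3
    have "dst G (\<eta> (tcls G m x)) (\<eta> (tcls G n y)) \<le> 2"
      using squams_dst_le_2[OF is_squams_G] alg_tcls_in[OF is_alg_G] m n xG yG by blast
    then show ?thesis
      unfolding coords
      using taxicab_carpet_map_far[OF 3 coord_in_unit_square[OF xG] coord_in_unit_square[OF yG]]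
        by linarith
  qed
qed

end

lemma dst_le_taxicab_coord:
  assumes "x \<in> carr G" "y \<in> carr G"
  shows "dst G x y \<le> 6 * taxicab (coord x) (coord y)"
proof -
  have on_level: "dst G x y \<le> 6 * taxicab (coord x) (coord y)" if "x \<in> level k" "y \<in> level k" for k x y
    using that
  proof (induction k arbitrary: x y)
    case 0
    then obtain p q where p: "p \<in> M0" "x = sqm G p" and q: "q \<in> M0" "y = sqm G q" by auto
    then show ?case
      using squams_dst_sqm_le[OF is_squams_G p(1) q(1)] taxicab_nonneg[of p q] by (simp add: coord_sqm)
  next
    case (Suc k)
    from Suc.prems obtain m x' n y' where m: "m \<in> Mset" "x' \<in> level k" "x = \<eta> (tcls G m x')"
      and n: "n \<in> Mset" "y' \<in> level k" "y = \<eta> (tcls G n y')"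
      unfolding mem_level_Suc by blast
    have "dst G (\<eta> (tcls G m x')) (\<eta> (tcls G n y'))
        \<le> 6 * taxicab (coord (\<eta> (tcls G m x'))) (coord (\<eta> (tcls G n y')))"
      by (rule dst_eta_le[OF level_subset_carr boundary_subset_level Suc.IH m(1) n(1) m(2) n(2)])
    then show ?case using m(3) n(3) by simp
  qed
  obtain k l where "x \<in> level k" "y \<in> level l"
    using assms carr_eq_UN_level by blast
  moreover have "level k \<subseteq> level (max k l)" "level l \<subseteq> level (max k l)"
    by (rule lift_Suc_mono_le[of level, OF level_Suc_mono], simp)+
  ultimately show ?thesis using on_level[of x "max k l" y] by blast
qed

lemma hutchinson_coord_image: "hutchinson (coord ` carr G) = coord ` carr G"
proof
  show "hutchinson (coord ` carr G) \<subseteq> coord ` carr G"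
    unfolding hutchinson_def using coord_eta alg_tcls_in[OF is_alg_G] by (auto simp flip: coord_eta)
  show "coord ` carr G \<subseteq> hutchinson (coord ` carr G)"
  proof
    fix y assume "y \<in> coord ` carr G"
    then obtain x where x: "x \<in> carr G" and y: "y = coord x" by blast
    obtain m x' where "m \<in> Mset" "x' \<in> carr G" "x = \<eta> (tcls G m x')" using x by (rule eta_surj)
    then show "y \<in> hutchinson (coord ` carr G)"
      unfolding hutchinson_def y by (auto simp: coord_eta)
  qed
qed

lemma closure_coord_image: "closure (coord ` carr G) = carpet"
proof (rule sym, rule carpet_eqI)
  have sub: "coord ` carr G \<subseteq> unit_square" using coord_in_unit_square by blast
  have "(0, 0) \<in> M0" by (simp add: M0_def)
  then have "coord (sqm G (0, 0)) \<in> coord ` carr G"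
    using squams_sqm_in[OF is_squams_G] by blast
  then have "closure (coord ` carr G) \<noteq> {}" using closure_subset by blast
  moreover have "bounded (coord ` carr G)"
    using sub bounded_subset compact_imp_bounded[OF compact_unit_square] by blast
  moreover have "closure (coord ` carr G) \<subseteq> unit_square"
    using sub compact_imp_closed[OF compact_unit_square] by (rule closure_minimal)
  ultimately show "carpet_fixpoint (closure (coord ` carr G))"
    unfolding carpet_fixpoint_def by (simp add: hutchinson_closure hutchinson_coord_image)
qed

end

theorem mainTheorem1:
  fixes G :: "'a squams" and \<eta> :: "((nat \<times> nat) \<times> 'a) set \<Rightarrow> 'a"
  assumes "is_initial_alg G \<eta>"
  shows "bilipschitz_equiv (carr (cauchy_completion G)) (dst (cauchy_completion G)) carpet taxicab \<and>
         bilipschitz_equiv (carr (cauchy_completion G)) (dst (cauchy_completion G)) carpet dist"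
proof -
  interpret initial_alg G \<eta> by unfold_locales (rule assms)
  have lower: "dist (coord x) (coord y) \<le> dst G x y" if "x \<in> carr G" "y \<in> carr G" for x y
    using dist_le_taxicab taxicab_coord_le[OF that] by (rule order_trans)
  have upper: "dst G x y \<le> 12 * dist (coord x) (coord y)" if "x \<in> carr G" "y \<in> carr G" for x y
    using dst_le_taxicab_coord[OF that] taxicab_le_2_dist[of "coord x" "coord y"] by linarith
  have "bilipschitz_equiv (compl_carr G) (compl_dist G) carpet dist"
    using bilipschitz_equiv_completion[OF squams_metric[OF is_squams_G] lower upper]
    by (simp add: closure_coord_image)
  then show ?thesis
    by (simp add: bilipschitz_equiv_taxicab cauchy_completion_def carr_def dst_def)
qed

end
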